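(* Let $h=h(u,v)$ be a smooth function with $h_{uu}h_{vv}\neq 0$ and consider the quasilinear system $$u_t=h_{uv}u_x+h_{vv}v_x,\qquad v_t=h_{uu}u_x+h_{uv}v_x .\tag{S}$$ (1) Let $u=u(x,t)$, $v=v(x,t)$ be a solution of (S) which is nondegenerate on a neighbourhood of a point $(x_0,t_0)$, i.e. $h_{uu}u_x^2-h_{vv}v_x^2\neq 0$ there, and put $u_0=u(x_0,t_0)$, $v_0=v(x_0,t_0)$. Then there exists a function $f=f(u,v)$ defined on a neighbourhood of $(u_0,v_0)$ and satisfying the linear PDE $$h_{uu}f_{vv}=h_{vv}f_{uu}$$ such that, on a sufficiently small neighbourhood of $(x_0,t_0)$, the identities $$x+t\,h_{uv}(u(x,t),v(x,t))=f_{uv}(u(x,t),v(x,t)),\qquad t\,h_{vv}(u(x,t),v(x,t))=f_{vv}(u(x,t),v(x,t))$$ hold. (2) Conversely, let $f=f(u,v)$ be any solution of $h_{uu}f_{vv}=h_{vv}f_{uu}$ defined on a neighbourhood of a point $(u_0,v_0)$, and let $(x_0,t_0)$ satisfy $x_0+t_0h_{uv}(u_0,v_0)=f_{uv}(u_0,v_0)$ and $t_0h_{vv}(u_0,v_0)=f_{vv}(u_0,v_0)$. Assume that $$\det\begin{pmatrix} t_0h_{uuv}-f_{uuv} & t_0h_{uvv}-f_{uvv}\\ t_0h_{uvv}-f_{uvv} & t_0h_{vvv}-f_{vvv}\end{pmatrix}\neq 0,$$ all derivatives evaluated at $(u_0,v_0)$. Then the functions $u=u(x,t)$, $v=v(x,t)$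 locally defined near $(x_0,t_0)$ (with $u(x_0,t_0)=u_0$, $v(x_0,t_0)=v_0$) by the implicit equations $$x+t\,h_{uv}(u,v)=f_{uv}(u,v),\qquad t\,h_{vv}(u,v)=f_{vv}(u,v)$$ satisfy the system (S).
   Context: Subscripts denote partial derivatives, e.g. $h_{uv}=\partial^2h/\partial u\partial v$. *)

theory Defs
  imports "HOL-Analysis.Analysis"
begin

definition pd1 :: "(real \<Rightarrow> real \<Rightarrow> real) \<Rightarrow> real \<Rightarrow> real \<Rightarrow> real" where
  "pd1 g = (\<lambda>a b. deriv (\<lambda>s. g s b) a)"

definition pd2 :: "(real \<Rightarrow> real \<Rightarrow> real) \<Rightarrow> real \<Rightarrow> real \<Rightarrow> real" where
  "pd2 g = (\<lambda>a b. deriv (\<lambda>s. g a s) b)"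

fun ipd :: "bool list \<Rightarrow> (real \<Rightarrow> real \<Rightarrow> real) \<Rightarrow> real \<Rightarrow> real \<Rightarrow> real" where
  "ipd [] g = g"
| "ipd (d # ds) g = ipd ds (if d then pd1 g else pd2 g)"

text \<open>Smoothness (C-infinity) on a set S of the plane: every iterated partial
  derivative is (Frechet) differentiable on S.\<close>

definition smooth2_on :: "(real \<times> real) set \<Rightarrow> (real \<Rightarrow> real \<Rightarrow> real) \<Rightarrow> bool" where
  "smooth2_on S g \<longleftrightarrow> (\<forall>ds. (\<lambda>(a, b). ipd ds g a b) differentiable_on S)"

end

theory Submission
  imports Defs
begin

text \<open>Part (1) is the hodograph method. By the system the Jacobian \<open>u\<^sub>x v\<^sub>t - u\<^sub>t v\<^sub>x\<close>
  equals \<open>h\<^sub>u\<^sub>u u\<^sub>x\<^sup>2 - h\<^sub>v\<^sub>v v\<^sub>x\<^sup>2 \<noteq> 0\<close>, so \<open>(x, t) \<mapsto> (u, v)\<close> has a smooth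
  local inverse \<open>(X, T)\<close>, and the system says precisely that the forms
  \<open>T h\<^sub>u\<^sub>u du + (X + T h\<^sub>u\<^sub>v) dv\<close> and \<open>(X + T h\<^sub>u\<^sub>v) du + T h\<^sub>v\<^sub>v dv\<close> are closed.
  Integrating them on a small rectangle gives \<open>f\<close> with \<open>f\<^sub>u\<^sub>u = T h\<^sub>u\<^sub>u\<close>,
  \<open>f\<^sub>u\<^sub>v = X + T h\<^sub>u\<^sub>v\<close>, \<open>f\<^sub>v\<^sub>v = T h\<^sub>v\<^sub>v\<close>, whence \<open>h\<^sub>u\<^sub>u f\<^sub>v\<^sub>v = h\<^sub>v\<^sub>v f\<^sub>u\<^sub>u\<close>.

  Part (2) runs this backwards: the implicit equations say \<open>(x, t) = (X, T)(u, v)\<close> with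
  \<open>T = f\<^sub>v\<^sub>v / h\<^sub>v\<^sub>v\<close> and \<open>X = f\<^sub>u\<^sub>v - T h\<^sub>u\<^sub>v\<close>. The determinant in the hypothesis is
  \<open>h\<^sub>v\<^sub>v\<close> times the Jacobian of \<open>(X, T)\<close>, so the inverse function theorem yields \<open>(u, v)\<close>,
  and the derivative of the inverse map, combined with the linear equation and its
  \<open>v\<close>-derivative, is the system.\<close>

type_synonym fn2 = "real \<Rightarrow> real \<Rightarrow> real"

definition agree_on :: "(real \<times> real) set \<Rightarrow> fn2 \<Rightarrow> fn2 \<Rightarrow> bool" where
  "agree_on S g k \<longleftrightarrow> (\<forall>(a, b) \<in> S. g a b = k a b)"

lemma agree_on_sym: "agree_on S g k \<Longrightarrow> agree_on S k g"
  by (auto simp: agree_on_def)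

lemma agree_on_subset: "agree_on S g k \<Longrightarrow> T \<subseteq> S \<Longrightarrow> agree_on T g k"
  by (auto simp: agree_on_def)

lemma agree_onI: "(\<And>a b. (a, b) \<in> S \<Longrightarrow> g a b = k a b) \<Longrightarrow> agree_on S g k"
  by (auto simp: agree_on_def)

lemma agree_onD: "agree_on S g k \<Longrightarrow> (a, b) \<in> S \<Longrightarrow> g a b = k a b"
  by (auto simp: agree_on_def)

section \<open>Smooth functions of two variables\<close>

lemma smooth2_on_iff:
  "smooth2_on S g \<longleftrightarrow>
     case_prod g differentiable_on S \<and> smooth2_on S (pd1 g) \<and> smooth2_on S (pd2 g)"
proof
  assume "smooth2_on S g"
  then have "case_prod (ipd ds g) differentiable_on S" for ds
    unfolding smooth2_on_def by (simp add: split_beta')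
  from this[of "[]"] this[of "True # _"] this[of "False # _"]
  show "case_prod g differentiable_on S \<and> smooth2_on S (pd1 g) \<and> smooth2_on S (pd2 g)"
    unfolding smooth2_on_def by (simp add: split_beta')
next
  assume H: "case_prod g differentiable_on S \<and> smooth2_on S (pd1 g) \<and> smooth2_on S (pd2 g)"
  then show "smooth2_on S g"
    unfolding smooth2_on_def
  proof (intro allI)
    fix ds show "(\<lambda>(a, b). ipd ds g a b) differentiable_on S"
    proof (cases ds)
      case (Cons d ds')
      with H show ?thesis
        unfolding smooth2_on_def by (cases d) auto
    qed (use H in \<open>simp add: split_beta'\<close>)
  qed
qed

lemma smooth2_on_imp_differentiable: "smooth2_on S g \<Longrightarrow> case_prod g differentiable_on S"
  and smooth2_on_pd1: "smooth2_on S g \<Longrightarrow> smooth2_on S (pd1 g)"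
  and smooth2_on_pd2: "smooth2_on S g \<Longrightarrow> smooth2_on S (pd2 g)"
  by (simp_all add: smooth2_on_iff[of S g])

lemma smooth2_on_subset: "smooth2_on S g \<Longrightarrow> T \<subseteq> S \<Longrightarrow> smooth2_on T g"
  unfolding smooth2_on_def using differentiable_on_subset by blast

lemma smooth2_on_imp_continuous_on: "smooth2_on S g \<Longrightarrow> continuous_on S (case_prod g)"
  by (rule differentiable_imp_continuous_on[OF smooth2_on_imp_differentiable])

lemma pd1_eqI: "((\<lambda>s. g s b) has_real_derivative D) (at a) \<Longrightarrow> pd1 g a b = D"
  unfolding pd1_def by (rule DERIV_imp_deriv)

lemma pd2_eqI: "((\<lambda>s. g a s) has_real_derivative D) (at b) \<Longrightarrow> pd2 g a b = D"
  unfolding pd2_def by (rule DERIV_imp_deriv)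

lemma agree_on_pd1:
  assumes "open S" "agree_on S g k"
  shows "agree_on S (pd1 g) (pd1 k)"
  unfolding agree_on_def pd1_def
proof clarify
  fix a b assume "(a, b) \<in> S"
  have "open ((\<lambda>s. (s, b)) -` S)"
    using \<open>open S\<close> by (auto intro!: open_vimage continuous_intros)
  with \<open>(a, b) \<in> S\<close> have "\<forall>\<^sub>F s in nhds a. (s, b) \<in> S"
    using eventually_nhds_in_open by fastforce
  then show "deriv (\<lambda>s. g s b) a = deriv (\<lambda>s. k s b) a"
    using assms(2) by (intro deriv_cong_ev) (auto elim: eventually_mono simp: agree_on_def)
qed

lemma agree_on_pd2:
  assumes "open S" "agree_on S g k"
  shows "agree_on S (pd2 g) (pd2 k)"
  unfolding agree_on_def pd2_def
proof clarify
  fix a b assume "(a, b) \<in> S"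
  have "open ((\<lambda>s. (a, s)) -` S)"
    using \<open>open S\<close> by (auto intro!: open_vimage continuous_intros)
  with \<open>(a, b) \<in> S\<close> have "\<forall>\<^sub>F s in nhds b. (a, s) \<in> S"
    using eventually_nhds_in_open by fastforce
  then show "deriv (\<lambda>s. g a s) b = deriv (\<lambda>s. k a s) b"
    using assms(2) by (intro deriv_cong_ev) (auto elim: eventually_mono simp: agree_on_def)
qed

lemma differentiable_on_agree_on:
  assumes "open S" "agree_on S g k" "case_prod g differentiable_on S"
  shows "case_prod k differentiable_on S"
  unfolding differentiable_on_def differentiable_def
proof clarify
  fix a b assume "(a, b) \<in> S"
  with assms(3) obtain D where "(case_prod g has_derivative D) (at (a, b) within S)"
    unfolding differentiable_on_def differentiable_def by blast
  then have "(case_prod k has_derivative D) (at (a, b) within S)"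
    using assms(1) \<open>(a, b) \<in> S\<close>
    by (rule has_derivative_transform_within_open) (use assms(2) in \<open>auto simp: agree_on_def\<close>)
  then show "\<exists>D. (case_prod k has_derivative D) (at (a, b) within S)" by blast
qed

lemma smooth2_on_agree_on:
  assumes "open S" "agree_on S g k" "smooth2_on S g"
  shows "smooth2_on S k"
proof -
  have "agree_on S (ipd ds g) (ipd ds k)" for ds
    using assms(2) by (induction ds arbitrary: g k) (auto intro: agree_on_pd1 agree_on_pd2 \<open>open S\<close>)
  then show ?thesis
    using assms(3) differentiable_on_agree_on[OF \<open>open S\<close>]
    unfolding smooth2_on_def by (simp add: split_beta') blast
qed

lemma smooth2_on_differentiable_at:
  "smooth2_on S g \<Longrightarrow> open S \<Longrightarrow> (a, b) \<in> S \<Longrightarrow> case_prod g differentiable (at (a, b))"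
  using differentiable_on_eq_differentiable_at smooth2_on_imp_differentiable by blast

lemma has_derivative_sections:
  assumes D: "(case_prod g has_derivative D) (at (a, b))"
  shows "((\<lambda>s. g s b) has_real_derivative D (1, 0)) (at a)"
    and "((\<lambda>s. g a s) has_real_derivative D (0, 1)) (at b)"
proof -
  have lin: "linear D" using D by (rule has_derivative_linear)
  have "((\<lambda>s. case_prod g (s, b)) has_derivative (\<lambda>h. D (h, 0))) (at a)"
    using has_derivative_compose[OF has_derivative_Pair[OF has_derivative_ident has_derivative_const] D]
    by (simp add: o_def)
  moreover have "(\<lambda>h. D (h, 0)) = (*) (D (1, 0))"
  proof
    fix h show "D (h, 0) = D (1, 0) * h"
      using linear_cmul[OF lin, of h "(1, 0)"] by (simp add: mult.commute)
  qed
  ultimately show "((\<lambda>s. g s b) has_real_derivative D (1, 0)) (at a)"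
    by (simp add: has_field_derivative_def mult.commute)
  have "((\<lambda>s. case_prod g (a, s)) has_derivative (\<lambda>k. D (0, k))) (at b)"
    using has_derivative_compose[OF has_derivative_Pair[OF has_derivative_const has_derivative_ident] D]
    by (simp add: o_def)
  moreover have "(\<lambda>k. D (0, k)) = (*) (D (0, 1))"
  proof
    fix k show "D (0, k) = D (0, 1) * k"
      using linear_cmul[OF lin, of k "(0, 1)"] by (simp add: mult.commute)
  qed
  ultimately show "((\<lambda>s. g a s) has_real_derivative D (0, 1)) (at b)"
    by (simp add: has_field_derivative_def mult.commute)
qed

lemma differentiable_at_pd:
  assumes "case_prod g differentiable (at (a, b))"
  shows "(case_prod g has_derivative (\<lambda>(h, k). pd1 g a b * h + pd2 g a b * k)) (at (a, b))"
    and "((\<lambda>s. g s b) has_real_derivative pd1 g a b) (at a)"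
    and "((\<lambda>s. g a s) has_real_derivative pd2 g a b) (at b)"
proof -
  obtain D where D: "(case_prod g has_derivative D) (at (a, b))"
    using assms unfolding differentiable_def by blast
  note sections = has_derivative_sections[OF D]
  have pd: "pd1 g a b = D (1, 0)" "pd2 g a b = D (0, 1)"
    using pd1_eqI[of g b, OF sections(1)] pd2_eqI[of g a, OF sections(2)] .
  with sections show "((\<lambda>s. g s b) has_real_derivative pd1 g a b) (at a)"
    "((\<lambda>s. g a s) has_real_derivative pd2 g a b) (at b)" by simp_all
  have "D (h, k) = pd1 g a b * h + pd2 g a b * k" for h k
  proof -
    have "D (h, k) = D (h *\<^sub>R (1, 0) + k *\<^sub>R (0, 1))" by simp
    also have "\<dots> = h * D (1, 0) + k * D (0, 1)"
      using has_derivative_linear[OF D] by (simp only: linear_add linear_cmul real_scaleR_def)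
    finally show ?thesis by (simp add: pd)
  qed
  then have "D = (\<lambda>(h, k). pd1 g a b * h + pd2 g a b * k)"
    by auto
  with D show "(case_prod g has_derivative (\<lambda>(h, k). pd1 g a b * h + pd2 g a b * k)) (at (a, b))"
    by simp
qed

lemma
  assumes "case_prod g differentiable (at (a, b))" "case_prod k differentiable (at (a, b))"
  shows pd1_add: "pd1 (\<lambda>x y. g x y + k x y) a b = pd1 g a b + pd1 k a b"
    and pd2_add: "pd2 (\<lambda>x y. g x y + k x y) a b = pd2 g a b + pd2 k a b"
    and pd1_diff: "pd1 (\<lambda>x y. g x y - k x y) a b = pd1 g a b - pd1 k a b"
    and pd2_diff: "pd2 (\<lambda>x y. g x y - k x y) a b = pd2 g a b - pd2 k a b"
    and pd1_mult: "pd1 (\<lambda>x y. g x y * k x y) a b = pd1 g a b * k a b + g a b * pd1 k a b"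
    and pd2_mult: "pd2 (\<lambda>x y. g x y * k x y) a b = pd2 g a b * k a b + g a b * pd2 k a b"
proof -
  note g = differentiable_at_pd(2,3)[OF assms(1)] and k = differentiable_at_pd(2,3)[OF assms(2)]
  show "pd1 (\<lambda>x y. g x y + k x y) a b = pd1 g a b + pd1 k a b"
    by (rule pd1_eqI) (rule DERIV_add[OF g(1) k(1)])
  show "pd2 (\<lambda>x y. g x y + k x y) a b = pd2 g a b + pd2 k a b"
    by (rule pd2_eqI) (rule DERIV_add[OF g(2) k(2)])
  show "pd1 (\<lambda>x y. g x y - k x y) a b = pd1 g a b - pd1 k a b"
    by (rule pd1_eqI) (rule DERIV_diff[OF g(1) k(1)])
  show "pd2 (\<lambda>x y. g x y - k x y) a b = pd2 g a b - pd2 k a b"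
    by (rule pd2_eqI) (rule DERIV_diff[OF g(2) k(2)])
  show "pd1 (\<lambda>x y. g x y * k x y) a b = pd1 g a b * k a b + g a b * pd1 k a b"
    by (rule pd1_eqI) (use DERIV_mult[OF g(1) k(1)] in \<open>simp add: mult.commute\<close>)
  show "pd2 (\<lambda>x y. g x y * k x y) a b = pd2 g a b * k a b + g a b * pd2 k a b"
    by (rule pd2_eqI) (use DERIV_mult[OF g(2) k(2)] in \<open>simp add: mult.commute\<close>)
qed

lemma
  assumes "case_prod g differentiable (at (a, b))" "case_prod k differentiable (at (a, b))"
    and "k a b \<noteq> 0"
  shows pd1_divide: "pd1 (\<lambda>x y. g x y / k x y) a b = (pd1 g a b * k a b - g a b * pd1 k a b) / (k a b * k a b)"
    and pd2_divide: "pd2 (\<lambda>x y. g x y / k x y) a b = (pd2 g a b * k a b - g a b * pd2 k a b) / (k a b * k a b)"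
proof -
  note g = differentiable_at_pd(2,3)[OF assms(1)] and k = differentiable_at_pd(2,3)[OF assms(2)]
  show "pd1 (\<lambda>x y. g x y / k x y) a b = (pd1 g a b * k a b - g a b * pd1 k a b) / (k a b * k a b)"
    by (rule pd1_eqI) (rule DERIV_divide[OF g(1) k(1) assms(3)])
  show "pd2 (\<lambda>x y. g x y / k x y) a b = (pd2 g a b * k a b - g a b * pd2 k a b) / (k a b * k a b)"
    by (rule pd2_eqI) (rule DERIV_divide[OF g(2) k(2) assms(3)])
qed

text \<open>A family whose members are differentiable and whose partial derivatives are finite sums
  of members (up to agreement on the domain) consists of smooth functions. This settles the
  induction over the order of differentiation once and for all.\<close>

inductive sum_closure :: "(real \<times> real) set \<Rightarrow> fn2 set \<Rightarrow> fn2 \<Rightarrow> bool" for S Q where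
  sum_closure_base: "q \<in> Q \<Longrightarrow> sum_closure S Q q"
| sum_closure_add: "sum_closure S Q k \<Longrightarrow> sum_closure S Q l \<Longrightarrow> sum_closure S Q (\<lambda>a b. k a b + l a b)"
| sum_closure_agree: "sum_closure S Q k \<Longrightarrow> agree_on S k l \<Longrightarrow> sum_closure S Q l"

lemma sum_closure_agreeI: "q \<in> Q \<Longrightarrow> agree_on S q k \<Longrightarrow> sum_closure S Q k"
  by (rule sum_closure_agree[OF sum_closure_base])

lemma sum_closure_add_agreeI:
  "q \<in> Q \<Longrightarrow> r \<in> Q \<Longrightarrow> agree_on S (\<lambda>a b. q a b + r a b) k \<Longrightarrow> sum_closure S Q k"
  by (rule sum_closure_agree[OF sum_closure_add[OF sum_closure_base sum_closure_base]])

locale pd_closed_family =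
  fixes S :: "(real \<times> real) set" and Q :: "fn2 set"
  assumes open_domain: "open S"
    and family_differentiable: "q \<in> Q \<Longrightarrow> case_prod q differentiable_on S"
    and family_pd1: "q \<in> Q \<Longrightarrow> sum_closure S Q (pd1 q)"
    and family_pd2: "q \<in> Q \<Longrightarrow> sum_closure S Q (pd2 q)"
begin

lemma sum_closure_differentiable: "sum_closure S Q k \<Longrightarrow> case_prod k differentiable_on S"
proof (induction rule: sum_closure.induct)
  case (sum_closure_add k l)
  then show ?case by (simp add: split_beta' differentiable_on_add)
qed (auto intro: family_differentiable differentiable_on_agree_on[OF open_domain])

lemma sum_closure_pd:
  assumes "sum_closure S Q k"
  shows "sum_closure S Q (pd1 k) \<and> sum_closure S Q (pd2 k)"
  using assms
proof (induction rule: sum_closure.induct)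
  case (sum_closure_add k l)
  have "case_prod k differentiable (at (a, b))" "case_prod l differentiable (at (a, b))"
    if "(a, b) \<in> S" for a b
    using sum_closure_add.hyps that open_domain
    by (auto dest!: sum_closure_differentiable simp: differentiable_on_eq_differentiable_at)
  then have "agree_on S (\<lambda>a b. pd1 k a b + pd1 l a b) (pd1 (\<lambda>a b. k a b + l a b))"
    "agree_on S (\<lambda>a b. pd2 k a b + pd2 l a b) (pd2 (\<lambda>a b. k a b + l a b))"
    by (auto simp: agree_on_def pd1_add pd2_add)
  with sum_closure_add.IH show ?case
    by (blast intro: sum_closure.intros)
qed (auto intro: family_pd1 family_pd2 sum_closure.intros agree_on_pd1 agree_on_pd2 open_domain)

lemma smooth2_on_sum_closure: "sum_closure S Q k \<Longrightarrow> smooth2_on S k"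
proof -
  assume "sum_closure S Q k"
  then have "sum_closure S Q (ipd ds k)" for ds
    by (induction ds arbitrary: k) (auto dest: sum_closure_pd)
  then show "smooth2_on S k"
    unfolding smooth2_on_def using sum_closure_differentiable by blast
qed

lemma smooth2_on_family: "q \<in> Q \<Longrightarrow> smooth2_on S q"
  by (rule smooth2_on_sum_closure[OF sum_closure_base])

end

lemma pd_const: "pd1 (\<lambda>x y. c) = (\<lambda>x y. 0)" "pd2 (\<lambda>x y. c) = (\<lambda>x y. 0)"
  by (simp_all add: pd1_def pd2_def)

lemma pd_fst: "pd1 (\<lambda>x y. x) = (\<lambda>x y. 1)" "pd2 (\<lambda>x y. x) = (\<lambda>x y. 0)"
  by (auto simp: pd1_def pd2_def intro!: ext DERIV_imp_deriv DERIV_ident)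

lemma pd_snd: "pd1 (\<lambda>x y. y) = (\<lambda>x y. 0)" "pd2 (\<lambda>x y. y) = (\<lambda>x y. 1)"
  by (auto simp: pd1_def pd2_def intro!: ext DERIV_imp_deriv DERIV_ident)

lemma
  assumes "open S"
  shows smooth2_on_const: "smooth2_on S (\<lambda>x y. c)"
    and smooth2_on_fst: "smooth2_on S (\<lambda>x y. x)"
    and smooth2_on_snd: "smooth2_on S (\<lambda>x y. y)"
proof -
  interpret pd_closed_family S "range (\<lambda>c x y. c) \<union> {\<lambda>x y. x, \<lambda>x y. y}"
  proof
    fix q :: fn2 assume q: "q \<in> range (\<lambda>c x y. c) \<union> {\<lambda>x y. x, \<lambda>x y. y}"
    have eqs: "case_prod (\<lambda>x y. c) = (\<lambda>_. c)" "case_prod (\<lambda>x y. x) = fst" "case_prod (\<lambda>x y. y) = snd"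
      for c :: real
      by auto
    from q show "case_prod q differentiable_on S"
      by (auto simp: eqs intro!: bounded_linear_imp_differentiable_on[OF bounded_linear_fst]
          bounded_linear_imp_differentiable_on[OF bounded_linear_snd])
    from q show "sum_closure S (range (\<lambda>c x y. c) \<union> {\<lambda>x y. x, \<lambda>x y. y}) (pd1 q)"
      "sum_closure S (range (\<lambda>c x y. c) \<union> {\<lambda>x y. x, \<lambda>x y. y}) (pd2 q)"
      by (auto simp: pd_const pd_fst pd_snd intro!: sum_closure_base)
  qed (fact \<open>open S\<close>)
  show "smooth2_on S (\<lambda>x y. c)" "smooth2_on S (\<lambda>x y. x)" "smooth2_on S (\<lambda>x y. y)"
    by (auto intro: smooth2_on_family)
qed

lemma smooth2_on_add:
  assumes "open S" "smooth2_on S g" "smooth2_on S k"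
  shows "smooth2_on S (\<lambda>x y. g x y + k x y)"
proof -
  interpret pd_closed_family S "Collect (smooth2_on S)"
    by unfold_locales
      (auto intro: \<open>open S\<close> smooth2_on_imp_differentiable smooth2_on_pd1 smooth2_on_pd2 sum_closure_base)
  show ?thesis
    using assms by (intro smooth2_on_sum_closure sum_closure_add sum_closure_base) auto
qed

lemma smooth2_on_mult:
  assumes "open S" "smooth2_on S g" "smooth2_on S k"
  shows "smooth2_on S (\<lambda>x y. g x y * k x y)"
proof -
  define Q where "Q = {\<lambda>x y. g x y * k x y | g k. smooth2_on S g \<and> smooth2_on S k}"
  interpret pd_closed_family S Q
  proof
    fix q assume "q \<in> Q"
    then obtain g k where gk: "smooth2_on S g" "smooth2_on S k" and q: "q = (\<lambda>x y. g x y * k x y)"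
      unfolding Q_def by blast
    have at: "case_prod g differentiable (at (a, b))" "case_prod k differentiable (at (a, b))"
      if "(a, b) \<in> S" for a b
      using gk that \<open>open S\<close> by (auto intro: smooth2_on_differentiable_at)
    show "case_prod q differentiable_on S"
      using gk by (auto simp: q split_beta' intro!: differentiable_on_mult dest!: smooth2_on_imp_differentiable)
    show "sum_closure S Q (pd1 q)"
      by (rule sum_closure_add_agreeI[of "\<lambda>x y. pd1 g x y * k x y" _ "\<lambda>x y. g x y * pd1 k x y"])
        (use gk at in \<open>auto simp: Q_def q agree_on_def pd1_mult intro: smooth2_on_pd1\<close>)
    show "sum_closure S Q (pd2 q)"
      by (rule sum_closure_add_agreeI[of "\<lambda>x y. pd2 g x y * k x y" _ "\<lambda>x y. g x y * pd2 k x y"])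
        (use gk at in \<open>auto simp: Q_def q agree_on_def pd2_mult intro: smooth2_on_pd2\<close>)
  qed (fact \<open>open S\<close>)
  show ?thesis
    using assms by (intro smooth2_on_family) (auto simp: Q_def)
qed

lemma smooth2_on_diff:
  assumes "open S" "smooth2_on S g" "smooth2_on S k"
  shows "smooth2_on S (\<lambda>x y. g x y - k x y)"
  using smooth2_on_add[OF assms(1,2) smooth2_on_mult[OF assms(1) smooth2_on_const[OF assms(1)] assms(3)],
      of "- 1"]
  by simp

lemma smooth2_on_uminus: "open S \<Longrightarrow> smooth2_on S g \<Longrightarrow> smooth2_on S (\<lambda>x y. - g x y)"
  using smooth2_on_diff[of S "\<lambda>x y. 0" g] smooth2_on_const[of S 0] by simp

lemma smooth2_on_inverse:
  assumes "open S" and g: "smooth2_on S g" and nz: "\<And>a b. (a, b) \<in> S \<Longrightarrow> g a b \<noteq> 0"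
  shows "smooth2_on S (\<lambda>x y. inverse (g x y))"
proof -
  define w where "w = (\<lambda>x y. inverse (g x y))"
  have w_diff: "case_prod w differentiable_on S"
    using differentiable_on_inverse[OF smooth2_on_imp_differentiable[OF g]] nz
    by (auto simp: w_def split_beta')
  text \<open>The partial derivatives of \<open>c * w ^ n\<close> have the form \<open>c' * w ^ n + c'' * w ^ Suc n\<close>.\<close>
  define Q where "Q = {\<lambda>x y. c x y * w x y ^ n | c n. smooth2_on S c}"
  have mem: "(\<lambda>x y. k x y * w x y ^ m) \<in> Q" if "smooth2_on S k" for k m
    using that unfolding Q_def by blast
  have pd_term: "(\<lambda>x y. pd1 c x y * w x y ^ n + (- real n * c x y * pd1 g x y) * w x y ^ Suc n) a b
        = pd1 (\<lambda>x y. c x y * w x y ^ n) a b"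
      "(\<lambda>x y. pd2 c x y * w x y ^ n + (- real n * c x y * pd2 g x y) * w x y ^ Suc n) a b
        = pd2 (\<lambda>x y. c x y * w x y ^ n) a b"
    if c: "smooth2_on S c" and ab: "(a, b) \<in> S" for c n a b
  proof -
    note dc = differentiable_at_pd(2,3)[OF smooth2_on_differentiable_at[OF c \<open>open S\<close> ab]]
    note dg = differentiable_at_pd(2,3)[OF smooth2_on_differentiable_at[OF g \<open>open S\<close> ab]]
    show "(\<lambda>x y. pd1 c x y * w x y ^ n + (- real n * c x y * pd1 g x y) * w x y ^ Suc n) a b
        = pd1 (\<lambda>x y. c x y * w x y ^ n) a b"
      unfolding w_def by (rule sym, rule pd1_eqI, rule DERIV_cong[OF DERIV_mult[OF dc(1)
            DERIV_power[OF DERIV_inverse'[OF dg(1) nz[OF ab]], of n]]])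
        (cases n, simp_all add: algebra_simps)
    show "(\<lambda>x y. pd2 c x y * w x y ^ n + (- real n * c x y * pd2 g x y) * w x y ^ Suc n) a b
        = pd2 (\<lambda>x y. c x y * w x y ^ n) a b"
      unfolding w_def by (rule sym, rule pd2_eqI, rule DERIV_cong[OF DERIV_mult[OF dc(2)
            DERIV_power[OF DERIV_inverse'[OF dg(2) nz[OF ab]], of n]]])
        (cases n, simp_all add: algebra_simps)
  qed
  interpret pd_closed_family S Q
  proof
    fix q assume "q \<in> Q"
    then obtain c n where c: "smooth2_on S c" and q: "q = (\<lambda>x y. c x y * w x y ^ n)"
      unfolding Q_def by blast
    have "case_prod (\<lambda>x y. w x y ^ m) differentiable_on S" for m
      using w_diff by (induction m) (simp_all add: split_beta' differentiable_on_mult)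
    then show "case_prod q differentiable_on S"
      using smooth2_on_imp_differentiable[OF c]
      by (simp add: q split_beta' differentiable_on_mult)
    have "smooth2_on S (\<lambda>x y. - real n * c x y)"
      by (rule smooth2_on_mult[OF \<open>open S\<close> smooth2_on_const[OF \<open>open S\<close>] c])
    then have coeff: "smooth2_on S (\<lambda>x y. - real n * c x y * pd1 g x y)"
      "smooth2_on S (\<lambda>x y. - real n * c x y * pd2 g x y)"
      by (rule smooth2_on_mult[OF \<open>open S\<close> _ smooth2_on_pd1[OF g]],
          rule smooth2_on_mult[OF \<open>open S\<close> _ smooth2_on_pd2[OF g]])
    show "sum_closure S Q (pd1 q)"
      by (rule sum_closure_add_agreeI[OF mem[OF smooth2_on_pd1[OF c], of n] mem[OF coeff(1), of "Suc n"]])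
        (auto simp: q agree_on_def pd_term[OF c, symmetric])
    show "sum_closure S Q (pd2 q)"
      by (rule sum_closure_add_agreeI[OF mem[OF smooth2_on_pd2[OF c], of n] mem[OF coeff(2), of "Suc n"]])
        (auto simp: q agree_on_def pd_term[OF c, symmetric])
  qed (fact \<open>open S\<close>)
  have "(\<lambda>x y. 1 * w x y ^ 1) \<in> Q"
    by (rule mem[OF smooth2_on_const[OF \<open>open S\<close>]])
  then show ?thesis
    using smooth2_on_family by (simp add: w_def)
qed

lemma smooth2_on_divide:
  assumes "open S" "smooth2_on S g" "smooth2_on S k" "\<And>a b. (a, b) \<in> S \<Longrightarrow> k a b \<noteq> 0"
  shows "smooth2_on S (\<lambda>x y. g x y / k x y)"
  using smooth2_on_mult[OF assms(1,2) smooth2_on_inverse[OF assms(1,3,4)]]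
  by (simp add: divide_inverse)

lemma DERIV_pd_chain:
  assumes "case_prod \<Phi> differentiable (at (u x, v x))"
    and "(u has_real_derivative u') (at x)" "(v has_real_derivative v') (at x)"
  shows "((\<lambda>s. \<Phi> (u s) (v s)) has_real_derivative
           pd1 \<Phi> (u x) (v x) * u' + pd2 \<Phi> (u x) (v x) * v') (at x)"
proof -
  have "((\<lambda>s. case_prod \<Phi> (u s, v s)) has_derivative
      (\<lambda>h. (\<lambda>(h, k). pd1 \<Phi> (u x) (v x) * h + pd2 \<Phi> (u x) (v x) * k) (u' * h, v' * h))) (at x)"
    using has_derivative_compose[OF has_derivative_Pair[OF assms(2,3)[unfolded has_field_derivative_def]]
        differentiable_at_pd(1)[OF assms(1)]]
    by (simp add: o_def)
  moreover have "(\<lambda>h. (\<lambda>(h, k). pd1 \<Phi> (u x) (v x) * h + pd2 \<Phi> (u x) (v x) * k) (u' * h, v' * h))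
      = (*) (pd1 \<Phi> (u x) (v x) * u' + pd2 \<Phi> (u x) (v x) * v')"
    by (auto simp: algebra_simps)
  ultimately show ?thesis
    by (simp add: has_field_derivative_def)
qed

lemma differentiable_at_compose2:
  assumes "case_prod \<Phi> differentiable (at (u x t, v x t))"
    and "case_prod u differentiable (at (x, t))" "case_prod v differentiable (at (x, t))"
  shows "(\<lambda>(x, t). \<Phi> (u x t) (v x t)) differentiable (at (x, t))"
proof -
  have "(case_prod \<Phi> \<circ> (\<lambda>p. (case_prod u p, case_prod v p))) differentiable (at (x, t))"
    using assms by (intro differentiable_chain_at) auto
  then show ?thesis by (simp add: o_def split_beta')
qed

text \<open>If the partial derivatives of \<open>(u, v)\<close> are smooth functions of \<open>(u, v)\<close>
  itself, the chain rule makes the family of all \<open>\<Phi> \<circ> (u, v)\<close> with smooth \<open>\<Phi>\<close>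
  closed under differentiation, so in particular \<open>u\<close> and \<open>v\<close> are smooth.\<close>

lemma smooth2_on_compose_of_jacobian:
  fixes u v :: fn2
  assumes "open N" "open W"
    and u: "case_prod u differentiable_on N" and v: "case_prod v differentiable_on N"
    and mem: "\<And>x t. (x, t) \<in> N \<Longrightarrow> (u x t, v x t) \<in> W"
    and smooth_jac: "smooth2_on W p11" "smooth2_on W p12" "smooth2_on W p21" "smooth2_on W p22"
    and jac: "\<And>x t. (x, t) \<in> N \<Longrightarrow>
      pd1 u x t = p11 (u x t) (v x t) \<and> pd2 u x t = p12 (u x t) (v x t) \<and>
      pd1 v x t = p21 (u x t) (v x t) \<and> pd2 v x t = p22 (u x t) (v x t)"
    and \<Phi>: "smooth2_on W \<Phi>"
  shows "smooth2_on N (\<lambda>x t. \<Phi> (u x t) (v x t))"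
proof -
  define Q where "Q = {\<lambda>x t. \<Phi> (u x t) (v x t) | \<Phi>. smooth2_on W \<Phi>}"
  have u_at: "case_prod u differentiable (at (x, t))" and v_at: "case_prod v differentiable (at (x, t))"
    if "(x, t) \<in> N" for x t
    using u v that \<open>open N\<close> differentiable_on_eq_differentiable_at by blast+
  interpret pd_closed_family N Q
  proof
    fix q assume "q \<in> Q"
    then obtain \<Phi> where \<Phi>: "smooth2_on W \<Phi>" and q: "q = (\<lambda>x t. \<Phi> (u x t) (v x t))"
      unfolding Q_def by blast
    have \<Phi>_at: "case_prod \<Phi> differentiable (at (u x t, v x t))" if "(x, t) \<in> N" for x t
      using smooth2_on_differentiable_at[OF \<Phi> \<open>open W\<close> mem[OF that]] .
    show "case_prod q differentiable_on N"
      using differentiable_at_compose2[OF \<Phi>_at u_at v_at] \<open>open N\<close>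
      by (auto simp: q differentiable_on_eq_differentiable_at)
    define d1 where "d1 = (\<lambda>a b. pd1 \<Phi> a b * p11 a b + pd2 \<Phi> a b * p21 a b)"
    define d2 where "d2 = (\<lambda>a b. pd1 \<Phi> a b * p12 a b + pd2 \<Phi> a b * p22 a b)"
    have "d1 (u x t) (v x t) = pd1 q x t" "d2 (u x t) (v x t) = pd2 q x t" if xt: "(x, t) \<in> N" for x t
    proof -
      show "d1 (u x t) (v x t) = pd1 q x t"
        using DERIV_pd_chain[where u="\<lambda>s. u s t" and v="\<lambda>s. v s t", OF \<Phi>_at[OF xt] differentiable_at_pd(2)[OF u_at[OF xt]] differentiable_at_pd(2)[OF v_at[OF xt]]]
        by (intro sym[OF pd1_eqI]) (simp add: q d1_def jac[OF xt])
      show "d2 (u x t) (v x t) = pd2 q x t"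
        using DERIV_pd_chain[where u="u x" and v="v x", OF \<Phi>_at[OF xt] differentiable_at_pd(3)[OF u_at[OF xt]] differentiable_at_pd(3)[OF v_at[OF xt]]]
        by (intro sym[OF pd2_eqI]) (simp add: q d2_def jac[OF xt])
    qed
    then have "agree_on N (\<lambda>x t. d1 (u x t) (v x t)) (pd1 q)" "agree_on N (\<lambda>x t. d2 (u x t) (v x t)) (pd2 q)"
      by (auto simp: agree_on_def)
    moreover have "smooth2_on W d1" "smooth2_on W d2"
      unfolding d1_def d2_def using smooth_jac \<Phi> \<open>open W\<close>
      by (auto intro!: smooth2_on_add smooth2_on_mult smooth2_on_pd1 smooth2_on_pd2)
    ultimately show "sum_closure N Q (pd1 q)" "sum_closure N Q (pd2 q)"
      by (auto intro: sum_closure_agreeI simp: Q_def)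
  qed (fact \<open>open N\<close>)
  show ?thesis
    using \<Phi> by (auto intro!: smooth2_on_family simp: Q_def)
qed

section \<open>The inverse function theorem in the plane\<close>

definition lin2 :: "real \<Rightarrow> real \<Rightarrow> real \<Rightarrow> real \<Rightarrow> real \<times> real \<Rightarrow> real \<times> real" where
  "lin2 A B C E = (\<lambda>(h, k). (A * h + B * k, C * h + E * k))"

lemma bounded_linear_lin2: "bounded_linear (lin2 A B C E)"
proof -
  have "lin2 A B C E = (\<lambda>z. (A * fst z + B * snd z, C * fst z + E * snd z))"
    by (auto simp: lin2_def)
  then show ?thesis
    by (simp add: bounded_linear_Pair bounded_linear_add bounded_linear_mult_right
        bounded_linear_compose[OF bounded_linear_mult_right] bounded_linear_fst bounded_linear_snd)
qed

lemma lin2_Cramer: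
  fixes A B C E :: real
  defines "\<delta> \<equiv> A * E - B * C"
  assumes "\<delta> \<noteq> 0"
  shows "lin2 A B C E \<circ> lin2 (E / \<delta>) (- B / \<delta>) (- C / \<delta>) (A / \<delta>) = id"
    and "lin2 (E / \<delta>) (- B / \<delta>) (- C / \<delta>) (A / \<delta>) \<circ> lin2 A B C E = id"
proof -
  have "E / \<delta> * (A * h + B * k) + - B / \<delta> * (C * h + E * k) = h"
    "- C / \<delta> * (A * h + B * k) + A / \<delta> * (C * h + E * k) = k"
    "A * (E / \<delta> * h + - B / \<delta> * k) + B * (- C / \<delta> * h + A / \<delta> * k) = h"
    "C * (E / \<delta> * h + - B / \<delta> * k) + E * (- C / \<delta> * h + A / \<delta> * k) = k" for h k
    using \<open>\<delta> \<noteq> 0\<close> by (simp_all add: field_simps) (simp_all add: \<delta>_def algebra_simps)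
  then show "lin2 A B C E \<circ> lin2 (E / \<delta>) (- B / \<delta>) (- C / \<delta>) (A / \<delta>) = id"
    "lin2 (E / \<delta>) (- B / \<delta>) (- C / \<delta>) (A / \<delta>) \<circ> lin2 A B C E = id"
    by (auto simp: lin2_def fun_eq_iff)
qed

lemma inv_lin2:
  assumes "A * E - B * C \<noteq> 0"
  shows "inv (lin2 A B C E) =
    lin2 (E / (A * E - B * C)) (- B / (A * E - B * C)) (- C / (A * E - B * C)) (A / (A * E - B * C))"
  using inv_unique_comp[OF lin2_Cramer[OF assms]] .

lemma bij_lin2_imp_det_nonzero:
  assumes "bij (lin2 A B C E)"
  shows "A * E - B * C \<noteq> 0"
proof
  assume det: "A * E - B * C = 0"
  have inj: "lin2 A B C E z = (0, 0) \<Longrightarrow> z = (0, 0)" for z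
    using injD[OF bij_is_inj[OF assms], of z "(0, 0)"] by (simp add: lin2_def)
  have "lin2 A B C E (E, - C) = (0, 0)" "lin2 A B C E (B, - A) = (0, 0)"
    using det by (simp_all add: lin2_def mult.commute)
  then have "E = 0" "C = 0" "B = 0" "A = 0"
    using inj by fastforce+
  then show False
    using inj[of "(1, 0)"] by (simp add: lin2_def)
qed

lemma continuous_on_Blinfun_lin2:
  fixes S :: "'a::t2_space set"
  assumes "continuous_on S A" "continuous_on S B" "continuous_on S C" "continuous_on S E"
  shows "continuous_on S (\<lambda>p. Blinfun (lin2 (A p) (B p) (C p) (E p)))"
proof (rule continuous_on_blinfun_componentwise)
  fix i :: "real \<times> real" assume "i \<in> Basis"
  then have "i = (1, 0) \<or> i = (0, 1)" by (auto simp: Basis_prod_def)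
  moreover have "blinfun_apply (Blinfun (lin2 (A p) (B p) (C p) (E p))) = lin2 (A p) (B p) (C p) (E p)" for p
    by (rule bounded_linear_Blinfun_apply[OF bounded_linear_lin2])
  ultimately show "continuous_on S (\<lambda>p. blinfun_apply (Blinfun (lin2 (A p) (B p) (C p) (E p))) i)"
    using assms by (auto simp: lin2_def intro!: continuous_intros)
qed

lemma has_derivative_pair_lin2:
  assumes "case_prod X differentiable (at (a, b))" "case_prod T differentiable (at (a, b))"
  shows "((\<lambda>(a, b). (X a b, T a b)) has_derivative lin2 (pd1 X a b) (pd2 X a b) (pd1 T a b) (pd2 T a b))
    (at (a, b))"
  using has_derivative_Pair[OF differentiable_at_pd(1)[OF assms(1)] differentiable_at_pd(1)[OF assms(2)]]
  by (simp add: lin2_def split_beta' case_prod_beta')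

lemma pd_eq_of_has_derivative_lin2:
  assumes "((\<lambda>(x, t). (u x t, v x t)) has_derivative lin2 A B C E) (at (x, t))"
  shows "pd1 u x t = A \<and> pd2 u x t = B \<and> pd1 v x t = C \<and> pd2 v x t = E"
proof -
  have "(case_prod u has_derivative (\<lambda>z. fst (lin2 A B C E z))) (at (x, t))"
    "(case_prod v has_derivative (\<lambda>z. snd (lin2 A B C E z))) (at (x, t))"
    using has_derivative_fst[OF assms] has_derivative_snd[OF assms] by (simp_all add: split_beta')
  from this[THEN has_derivative_sections(1)] this[THEN has_derivative_sections(2)] show ?thesis
    by (auto simp: lin2_def intro!: pd1_eqI pd2_eqI)
qed

definition jac2 :: "fn2 \<Rightarrow> fn2 \<Rightarrow> real \<Rightarrow> real \<Rightarrow> real" where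
  "jac2 X T a b = pd1 X a b * pd2 T a b - pd2 X a b * pd1 T a b"

theorem inverse_function_theorem2:
  assumes "open W" "(a0, b0) \<in> W" and X: "smooth2_on W X" and T: "smooth2_on W T"
    and "jac2 X T a0 b0 \<noteq> 0"
  obtains W' N u v where "open W'" "W' \<subseteq> W" "(a0, b0) \<in> W'" "open N" "(X a0 b0, T a0 b0) \<in> N"
    "\<And>a b. (a, b) \<in> W' \<Longrightarrow> (X a b, T a b) \<in> N \<and> u (X a b) (T a b) = a \<and> v (X a b) (T a b) = b"
    "\<And>x t. (x, t) \<in> N \<Longrightarrow> (u x t, v x t) \<in> W' \<and> X (u x t) (v x t) = x \<and> T (u x t) (v x t) = t"
    "\<And>a b. (a, b) \<in> W' \<Longrightarrow> jac2 X T a b \<noteq> 0"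
    "case_prod u differentiable_on N" "case_prod v differentiable_on N"
    "\<And>x t. (x, t) \<in> N \<Longrightarrow>
       pd1 u x t = pd2 T (u x t) (v x t) / jac2 X T (u x t) (v x t) \<and>
       pd2 u x t = - pd2 X (u x t) (v x t) / jac2 X T (u x t) (v x t) \<and>
       pd1 v x t = - pd1 T (u x t) (v x t) / jac2 X T (u x t) (v x t) \<and>
       pd2 v x t = pd1 X (u x t) (v x t) / jac2 X T (u x t) (v x t)"
proof -
  define F where "F = (\<lambda>(a, b). (X a b, T a b))"
  define L where "L = (\<lambda>p. lin2 (case_prod (pd1 X) p) (case_prod (pd2 X) p) (case_prod (pd1 T) p) (case_prod (pd2 T) p))"
  have L_apply: "blinfun_apply (Blinfun (L p)) = L p" for p
    unfolding L_def by (rule bounded_linear_Blinfun_apply[OF bounded_linear_lin2])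
  have F_deriv: "(F has_derivative blinfun_apply (Blinfun (L p))) (at p)" if "p \<in> W" for p
    using that has_derivative_pair_lin2[OF smooth2_on_differentiable_at[OF X \<open>open W\<close>]
        smooth2_on_differentiable_at[OF T \<open>open W\<close>]]
    by (cases p) (simp add: F_def L_def bounded_linear_Blinfun_apply[OF bounded_linear_lin2])
  have L_cont: "continuous_on W (\<lambda>p. Blinfun (L p))"
    unfolding L_def using X T
    by (intro continuous_on_Blinfun_lin2 smooth2_on_imp_continuous_on smooth2_on_pd1 smooth2_on_pd2)
  have L_inv: "Blinfun (inv (L (a0, b0))) o\<^sub>L Blinfun (L (a0, b0)) = id_blinfun"
  proof (rule blinfun_eqI)
    fix z
    have "inv (L (a0, b0)) (L (a0, b0) z) = z"
      using pointfree_idE[OF lin2_Cramer(2)] \<open>jac2 X T a0 b0 \<noteq> 0\<close>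
      by (simp add: L_def inv_lin2 jac2_def)
    then show "blinfun_apply (Blinfun (inv (L (a0, b0))) o\<^sub>L Blinfun (L (a0, b0))) z = blinfun_apply id_blinfun z"
      using \<open>jac2 X T a0 b0 \<noteq> 0\<close>
      by (simp add: L_apply L_def inv_lin2 jac2_def bounded_linear_Blinfun_apply[OF bounded_linear_lin2])
  qed
  obtain W' N g g' where W': "open W'" "W' \<subseteq> W" "(a0, b0) \<in> W'"
    and N: "open N" "F (a0, b0) \<in> N" and hom: "homeomorphism W' N F g"
    and g_deriv: "\<And>y. y \<in> N \<Longrightarrow> (g has_derivative g' y) (at y)"
    and g': "\<And>y. y \<in> N \<Longrightarrow> g' y = inv (L (g y))"
    and bij: "\<And>y. y \<in> N \<Longrightarrow> bij (L (g y))"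
    by (rule inverse_function_theorem[OF \<open>open W\<close> F_deriv L_cont \<open>(a0, b0) \<in> W\<close> L_inv])
      (auto simp: L_apply)
  define u where "u = (\<lambda>x t. fst (g (x, t)))"
  define v where "v = (\<lambda>x t. snd (g (x, t)))"
  have g_uv: "g = (\<lambda>(x, t). (u x t, v x t))" by (simp add: u_def v_def split_beta')
  have inverse: "\<And>p. p \<in> W' \<Longrightarrow> g (F p) = p" "F ` W' = N" "\<And>y. y \<in> N \<Longrightarrow> F (g y) = y" "g ` N = W'"
    using hom unfolding homeomorphism_def by auto
  have jac: "jac2 X T a b \<noteq> 0" if "(a, b) \<in> W'" for a b
    using bij[of "F (a, b)"] inverse(1,2) that bij_lin2_imp_det_nonzero
    by (force simp: L_def jac2_def)
  show ?thesis
  proof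
    show "(X a0 b0, T a0 b0) \<in> N" using N(2) by (simp add: F_def)
    show "(X a b, T a b) \<in> N \<and> u (X a b) (T a b) = a \<and> v (X a b) (T a b) = b" if "(a, b) \<in> W'" for a b
      using inverse(1,2) that by (force simp: F_def u_def v_def)
    show "(u x t, v x t) \<in> W' \<and> X (u x t) (v x t) = x \<and> T (u x t) (v x t) = t" if "(x, t) \<in> N" for x t
      using inverse(3,4) that by (force simp: F_def g_uv)
    have "g = (\<lambda>p. (case_prod u p, case_prod v p))" by (simp add: u_def v_def split_beta')
    then have "case_prod u differentiable (at y)" "case_prod v differentiable (at y)" if "y \<in> N" for y
      using has_derivative_fst[OF g_deriv[OF that]] has_derivative_snd[OF g_deriv[OF that]]
      unfolding differentiable_def by auto
    then show "case_prod u differentiable_on N" "case_prod v differentiable_on N"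
      unfolding differentiable_on_eq_differentiable_at[OF N(1)] by blast+
    fix x t assume xt: "(x, t) \<in> N"
    then have "(u x t, v x t) \<in> W'" using inverse(4) by (force simp: g_uv)
    then have "(g has_derivative lin2 (pd2 T (u x t) (v x t) / jac2 X T (u x t) (v x t))
        (- pd2 X (u x t) (v x t) / jac2 X T (u x t) (v x t)) (- pd1 T (u x t) (v x t) / jac2 X T (u x t) (v x t))
        (pd1 X (u x t) (v x t) / jac2 X T (u x t) (v x t))) (at (x, t))"
      using g_deriv[OF xt] g'[OF xt] jac by (simp add: g_uv L_def inv_lin2 jac2_def)
    from pd_eq_of_has_derivative_lin2[OF this[unfolded g_uv]]
    show "pd1 u x t = pd2 T (u x t) (v x t) / jac2 X T (u x t) (v x t) \<and>
       pd2 u x t = - pd2 X (u x t) (v x t) / jac2 X T (u x t) (v x t) \<and>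
       pd1 v x t = - pd1 T (u x t) (v x t) / jac2 X T (u x t) (v x t) \<and>
       pd2 v x t = pd1 X (u x t) (v x t) / jac2 X T (u x t) (v x t)" .
  qed (use W' N jac in auto)
qed

lemma smooth2_on_jac2: "open W \<Longrightarrow> smooth2_on W X \<Longrightarrow> smooth2_on W T \<Longrightarrow> smooth2_on W (jac2 X T)"
  unfolding jac2_def by (intro smooth2_on_diff smooth2_on_mult smooth2_on_pd1 smooth2_on_pd2)

theorem smooth_inverse_function_theorem2:
  assumes W: "open W" "(a0, b0) \<in> W" and X: "smooth2_on W X" and T: "smooth2_on W T"
    and "jac2 X T a0 b0 \<noteq> 0"
  obtains W' N u v where "open W'" "W' \<subseteq> W" "(a0, b0) \<in> W'" "open N" "(X a0 b0, T a0 b0) \<in> N"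
    "\<And>a b. (a, b) \<in> W' \<Longrightarrow> (X a b, T a b) \<in> N \<and> u (X a b) (T a b) = a \<and> v (X a b) (T a b) = b"
    "\<And>x t. (x, t) \<in> N \<Longrightarrow> (u x t, v x t) \<in> W' \<and> X (u x t) (v x t) = x \<and> T (u x t) (v x t) = t"
    "\<And>a b. (a, b) \<in> W' \<Longrightarrow> jac2 X T a b \<noteq> 0" "smooth2_on N u" "smooth2_on N v"
    "\<And>x t. (x, t) \<in> N \<Longrightarrow>
       pd1 u x t = pd2 T (u x t) (v x t) / jac2 X T (u x t) (v x t) \<and>
       pd2 u x t = - pd2 X (u x t) (v x t) / jac2 X T (u x t) (v x t) \<and>
       pd1 v x t = - pd1 T (u x t) (v x t) / jac2 X T (u x t) (v x t) \<and>
       pd2 v x t = pd1 X (u x t) (v x t) / jac2 X T (u x t) (v x t)"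
proof -
  obtain W' N u v where W': "open W'" "W' \<subseteq> W" "(a0, b0) \<in> W'" and N: "open N" "(X a0 b0, T a0 b0) \<in> N"
    and fw: "\<And>a b. (a, b) \<in> W' \<Longrightarrow> (X a b, T a b) \<in> N \<and> u (X a b) (T a b) = a \<and> v (X a b) (T a b) = b"
    and bw: "\<And>x t. (x, t) \<in> N \<Longrightarrow> (u x t, v x t) \<in> W' \<and> X (u x t) (v x t) = x \<and> T (u x t) (v x t) = t"
    and jac: "\<And>a b. (a, b) \<in> W' \<Longrightarrow> jac2 X T a b \<noteq> 0"
    and u: "case_prod u differentiable_on N" and v: "case_prod v differentiable_on N"
    and pd: "\<And>x t. (x, t) \<in> N \<Longrightarrow>
       pd1 u x t = pd2 T (u x t) (v x t) / jac2 X T (u x t) (v x t) \<and>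
       pd2 u x t = - pd2 X (u x t) (v x t) / jac2 X T (u x t) (v x t) \<and>
       pd1 v x t = - pd1 T (u x t) (v x t) / jac2 X T (u x t) (v x t) \<and>
       pd2 v x t = pd1 X (u x t) (v x t) / jac2 X T (u x t) (v x t)"
    using inverse_function_theorem2[OF assms] by blast
  have X': "smooth2_on W' X" and T': "smooth2_on W' T"
    using smooth2_on_subset[OF X W'(2)] smooth2_on_subset[OF T W'(2)] .
  have jac': "smooth2_on W' (jac2 X T)"
    using smooth2_on_jac2[OF W'(1) X' T'] .
  have "smooth2_on N (\<lambda>x t. \<Phi> (u x t) (v x t))" if "smooth2_on W' \<Phi>" for \<Phi>
  proof (rule smooth2_on_compose_of_jacobian[OF N(1) W'(1) u v])
    show "smooth2_on W' (\<lambda>a b. pd2 T a b / jac2 X T a b)" "smooth2_on W' (\<lambda>a b. - pd2 X a b / jac2 X T a b)"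
      "smooth2_on W' (\<lambda>a b. - pd1 T a b / jac2 X T a b)" "smooth2_on W' (\<lambda>a b. pd1 X a b / jac2 X T a b)"
      using X' T' jac jac' W'(1)
      by (auto intro!: smooth2_on_divide smooth2_on_uminus smooth2_on_pd1 smooth2_on_pd2)
  qed (use bw pd that in auto)
  from this[OF smooth2_on_fst[OF W'(1)]] this[OF smooth2_on_snd[OF W'(1)]]
  show ?thesis
    using that[OF W' N fw bw jac] pd by simp
qed

section \<open>Integrals over rectangles: symmetry of mixed partials and potentials\<close>

lemma smooth2_on_has_pd:
  assumes "smooth2_on S g" "open S" "(a, b) \<in> S"
  shows "((\<lambda>s. g s b) has_real_derivative pd1 g a b) (at a)"
    and "((\<lambda>s. g a s) has_real_derivative pd2 g a b) (at b)"
  using differentiable_at_pd(2,3)[OF smooth2_on_differentiable_at[OF assms]] .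

lemma closed_rectangle_in_open:
  fixes a b :: real
  assumes "open S" "(a, b) \<in> S"
  obtains r where "r > 0" "{a - r..a + r} \<times> {b - r..b + r} \<subseteq> S"
proof -
  obtain e where e: "e > 0" "ball (a, b) e \<subseteq> S"
    using assms open_contains_ball by blast
  have "{a - e / 3..a + e / 3} \<times> {b - e / 3..b + e / 3} \<subseteq> ball (a, b) e"
  proof clarify
    fix x y assume "x \<in> {a - e / 3..a + e / 3}" "y \<in> {b - e / 3..b + e / 3}"
    then have "norm (a - x, b - y) \<le> e / 3 + e / 3"
      using norm_Pair_le[of "a - x" "b - y"] by auto
    then show "(x, y) \<in> ball (a, b) e"
      using e(1) by (simp add: dist_norm)
  qed
  with e that[of "e / 3"] show thesis by auto
qed

locale closed_rectangle =
  fixes S :: "(real \<times> real) set" and c c' d d' :: real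
  assumes open_S: "open S" and rectangle_subset: "{c..c'} \<times> {d..d'} \<subseteq> S"
begin

lemma mem_S: "x \<in> {c..c'} \<Longrightarrow> y \<in> {d..d'} \<Longrightarrow> (x, y) \<in> S"
  using rectangle_subset by auto

lemma continuous_on_sections:
  assumes "smooth2_on S k"
  shows "x \<in> {c..c'} \<Longrightarrow> continuous_on {d..d'} (\<lambda>s. k x s)"
    and "y \<in> {d..d'} \<Longrightarrow> continuous_on {c..c'} (\<lambda>s. k s y)"
proof -
  note k = smooth2_on_imp_continuous_on[OF assms]
  show "continuous_on {d..d'} (\<lambda>s. k x s)" if "x \<in> {c..c'}"
    by (rule continuous_on_compose2[OF k, of _ "\<lambda>s. (x, s)", simplified])
      (use that mem_S in \<open>auto intro: continuous_on_Pair continuous_on_id\<close>)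
  show "continuous_on {c..c'} (\<lambda>s. k s y)" if "y \<in> {d..d'}"
    by (rule continuous_on_compose2[OF k, of _ "\<lambda>s. (s, y)", simplified])
      (use that mem_S in \<open>auto intro: continuous_on_Pair continuous_on_id\<close>)
qed

lemma has_real_derivative_integral_upper:
  assumes "smooth2_on S k"
  shows "x \<in> {c..c'} \<Longrightarrow> y \<in> {d<..<d'} \<Longrightarrow>
      ((\<lambda>y. integral {d..y} (\<lambda>s. k x s)) has_real_derivative k x y) (at y)"
    and "y \<in> {d..d'} \<Longrightarrow> x \<in> {c<..<c'} \<Longrightarrow>
      ((\<lambda>x. integral {c..x} (\<lambda>s. k s y)) has_real_derivative k x y) (at x)"
  using integral_has_real_derivative[OF continuous_on_sections(1)[OF assms], of x y]
    integral_has_real_derivative[OF continuous_on_sections(2)[OF assms], of y x]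
    at_within_Icc_at[of d y d'] at_within_Icc_at[of c x c']
  by auto

lemma has_real_derivative_integral_parameter:
  assumes k: "smooth2_on S k" and x: "x \<in> {c<..<c'}" and y: "y \<in> {d..d'}"
  shows "((\<lambda>x. integral {d..y} (\<lambda>s. k x s)) has_real_derivative integral {d..y} (\<lambda>s. pd1 k x s)) (at x)"
proof -
  have "((\<lambda>x. integral (cbox d y) (\<lambda>s. k x s)) has_real_derivative integral (cbox d y) (\<lambda>s. pd1 k x s))
      (at x within {c..c'})"
  proof (rule leibniz_rule_field_derivative)
    fix x t assume "x \<in> {c..c'}" "t \<in> cbox d y"
    then have "(x, t) \<in> S" using y mem_S by auto
    then show "((\<lambda>x. k x t) has_real_derivative pd1 k x t) (at x within {c..c'})"
      by (rule has_field_derivative_at_within[OF smooth2_on_has_pd(1)[OF k open_S]])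
  next
    fix x assume "x \<in> {c..c'}"
    have "continuous_on {d..y} (\<lambda>s. k x s)"
      by (rule continuous_on_subset[OF continuous_on_sections(1)[OF k \<open>x \<in> {c..c'}\<close>]]) (use y in auto)
    then show "(\<lambda>s. k x s) integrable_on cbox d y"
      by (simp add: integrable_continuous_interval)
  next
    have "{c..c'} \<times> cbox d y \<subseteq> S" using y mem_S by auto
    then show "continuous_on ({c..c'} \<times> cbox d y) (\<lambda>(x, t). pd1 k x t)"
      by (rule continuous_on_subset[OF smooth2_on_imp_continuous_on[OF smooth2_on_pd1[OF k]]])
  next
    show "x \<in> {c..c'}" "convex {c..c'}" using x by auto
  qed
  then show ?thesis
    using at_within_Icc_at[of c x c'] x by simp
qed

lemma eq_integral_pd2:
  assumes g: "smooth2_on S g" and x: "x \<in> {c..c'}" and y: "y \<in> {d..d'}"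
  shows "g x y = g x d + integral {d..y} (\<lambda>s. pd2 g x s)"
proof -
  have "((\<lambda>s. pd2 g x s) has_integral (g x y - g x d)) {d..y}"
  proof (rule fundamental_theorem_of_calculus)
    fix s assume "s \<in> {d..y}"
    then have "(x, s) \<in> S" using x y mem_S by auto
    then have "((\<lambda>s. g x s) has_real_derivative pd2 g x s) (at s within {d..y})"
      by (rule has_field_derivative_at_within[OF smooth2_on_has_pd(2)[OF g open_S]])
    then show "((\<lambda>s. g x s) has_vector_derivative pd2 g x s) (at s within {d..y})"
      by (simp add: has_real_derivative_iff_has_vector_derivative)
  next
    show "d \<le> y" using y by auto
  qed
  then show ?thesis by (simp add: integral_unique)
qed

end

text \<open>Symmetry of the mixed partials: differentiating
  \<open>g x y = g x d + \<integral>\<^sub>d\<^sup>y pd2 g x s ds\<close> under the integral sign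
  expresses \<open>pd1 g\<close> as a function whose \<open>y\<close>-derivative is visibly \<open>pd1 (pd2 g)\<close>.\<close>

lemma pd2_pd1_eq_pd1_pd2:
  assumes S: "open S" and g: "smooth2_on S g" and ab: "(a, b) \<in> S"
  shows "pd2 (pd1 g) a b = pd1 (pd2 g) a b"
proof -
  obtain r where r: "r > 0" "{a - r..a + r} \<times> {b - r..b + r} \<subseteq> S"
    using closed_rectangle_in_open[OF S ab] .
  interpret closed_rectangle S "a - r" "a + r" "b - r" "b + r"
    using r S by unfold_locales auto
  define B where "B = {a - r<..<a + r} \<times> {b - r<..<b + r}"
  have B: "open B" "(a, b) \<in> B"
    unfolding B_def using r by (auto intro!: open_Times)
  define G where "G = (\<lambda>x y. pd1 g x (b - r) + integral {b - r..y} (\<lambda>s. pd1 (pd2 g) x s))"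
  have "pd1 g x y = G x y" if "(x, y) \<in> B" for x y
  proof -
    have x: "x \<in> {a - r<..<a + r}" and y: "y \<in> {b - r..b + r}"
      using that by (auto simp: B_def)
    have "\<forall>\<^sub>F x' in nhds x. g x' y = g x' (b - r) + integral {b - r..y} (\<lambda>s. pd2 g x' s)"
      using eventually_nhds_in_open[OF open_greaterThanLessThan x]
      by (rule eventually_mono) (use y in \<open>auto intro: eq_integral_pd2[OF g]\<close>)
    then have "pd1 g x y = deriv (\<lambda>x'. g x' (b - r) + integral {b - r..y} (\<lambda>s. pd2 g x' s)) x"
      unfolding pd1_def by (rule deriv_cong_ev) simp
    also have "\<dots> = G x y"
      unfolding G_def
      by (intro DERIV_imp_deriv DERIV_add smooth2_on_has_pd(1)[OF g S]
          has_real_derivative_integral_parameter[OF smooth2_on_pd2[OF g] x y])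
        (use x r in \<open>auto intro: mem_S\<close>)
    finally show ?thesis .
  qed
  then have "agree_on B (pd2 (pd1 g)) (pd2 G)"
    by (intro agree_on_pd2[OF B(1)]) (auto simp: agree_on_def)
  moreover have "pd2 G a b = pd1 (pd2 g) a b"
  proof (rule pd2_eqI)
    have "a \<in> {a - r..a + r}" "b \<in> {b - r<..<b + r}" using r by auto
    from DERIV_add[OF DERIV_const has_real_derivative_integral_upper(1)[OF smooth2_on_pd1[OF smooth2_on_pd2[OF g]] this]]
    show "((\<lambda>s. G a s) has_real_derivative pd1 (pd2 g) a b) (at b)" unfolding G_def by simp
  qed
  ultimately show ?thesis
    using agree_onD[OF _ B(2)] by metis
qed

lemma pd_third_order_symmetric:
  assumes S: "open S" and g: "smooth2_on S g" and ab: "(a, b) \<in> S"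
  shows "pd1 (pd2 (pd2 g)) a b = pd2 (pd2 (pd1 g)) a b"
    and "pd1 (pd1 (pd2 g)) a b = pd2 (pd1 (pd1 g)) a b"
    and "pd2 (pd1 (pd2 g)) a b = pd2 (pd2 (pd1 g)) a b"
proof -
  have "agree_on S (pd1 (pd2 g)) (pd2 (pd1 g))"
    by (rule agree_onI) (rule pd2_pd1_eq_pd1_pd2[OF S g, symmetric])
  note mixed1 = agree_onD[OF agree_on_pd1[OF S this] ab] and mixed2 = agree_onD[OF agree_on_pd2[OF S this] ab]
  show "pd1 (pd2 (pd2 g)) a b = pd2 (pd2 (pd1 g)) a b"
    using pd2_pd1_eq_pd1_pd2[OF S smooth2_on_pd2[OF g] ab] mixed2 by simp
  show "pd1 (pd1 (pd2 g)) a b = pd2 (pd1 (pd1 g)) a b"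
    using pd2_pd1_eq_pd1_pd2[OF S smooth2_on_pd1[OF g] ab] mixed1 by simp
  show "pd2 (pd1 (pd2 g)) a b = pd2 (pd2 (pd1 g)) a b"
    using mixed2 .
qed

lemma differentiable_on_Times_of_partials:
  fixes I J :: "real set"
  assumes "open I" "open J" "convex J"
    and f_x: "\<And>x y. (x, y) \<in> I \<times> J \<Longrightarrow> ((\<lambda>x. f x y) has_real_derivative P x y) (at x)"
    and f_y: "\<And>x y. (x, y) \<in> I \<times> J \<Longrightarrow> ((\<lambda>y. f x y) has_real_derivative R x y) (at y)"
    and R: "continuous_on (I \<times> J) (case_prod R)"
  shows "case_prod f differentiable_on (I \<times> J)"
proof -
  have "case_prod f differentiable at (x, y)" if xy: "(x, y) \<in> I \<times> J" for x y
  proof -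
    have "(case_prod f has_derivative (\<lambda>(h, k). (*) (P x y) h + blinfun_mult_right (R x y) k))
        (at (x, y) within I \<times> J)"
    proof (rule has_derivative_partialsI)
      show "((\<lambda>x. f x y) has_derivative (*) (P x y)) (at x within I)"
        using f_x[OF xy] unfolding has_field_derivative_def by (rule has_derivative_at_withinI)
      show "((\<lambda>y. f x y) has_derivative blinfun_apply (blinfun_mult_right (R x y))) (at y within J)"
        if "x \<in> I" "y \<in> J" for x y
        using f_y[of x y] that has_field_derivative_eq_has_derivative_blinfun has_field_derivative_at_within
        by force
      have "continuous (at (x, y) within I \<times> J) (case_prod R)"
        using R xy unfolding continuous_on_eq_continuous_within by auto
      then show "continuous (at (x, y) within I \<times> J) (\<lambda>(x, y). blinfun_mult_right (R x y))"
        by (auto simp: split_beta' intro!: continuous_intros)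
    qed (use xy \<open>convex J\<close> in auto)
    then show ?thesis
      using at_within_open[OF xy open_Times[OF assms(1,2)]] by (auto simp: differentiable_def)
  qed
  then show ?thesis
    unfolding differentiable_on_eq_differentiable_at[OF open_Times[OF assms(1,2)]] by auto
qed

lemma exists_local_potential:
  assumes S: "open S" and P: "smooth2_on S P" and R: "smooth2_on S R"
    and closed: "agree_on S (pd2 P) (pd1 R)" and ab: "(a, b) \<in> S"
  obtains B f where "open B" "(a, b) \<in> B" "B \<subseteq> S" "smooth2_on B f"
    "agree_on B (pd1 f) P" "agree_on B (pd2 f) R"
proof -
  obtain r where r: "r > 0" "{a - r..a + r} \<times> {b - r..b + r} \<subseteq> S"
    using closed_rectangle_in_open[OF S ab] .
  interpret closed_rectangle S "a - r" "a + r" "b - r" "b + r"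
    using r S by unfold_locales auto
  define I where "I = {a - r<..<a + r}"
  define J where "J = {b - r<..<b + r}"
  define B where "B = I \<times> J"
  have B: "open B" "(a, b) \<in> B" "B \<subseteq> S"
    unfolding B_def I_def J_def using r mem_S by (auto intro!: open_Times)
  define f where "f = (\<lambda>x y. integral {a - r..x} (\<lambda>s. P s (b - r)) + integral {b - r..y} (\<lambda>s. R x s))"
  have f_y: "((\<lambda>y. f x y) has_real_derivative R x y) (at y)" if "(x, y) \<in> B" for x y
  proof -
    have "x \<in> {a - r..a + r}" "y \<in> {b - r<..<b + r}" using that by (auto simp: B_def I_def J_def)
    from DERIV_add[OF DERIV_const has_real_derivative_integral_upper(1)[OF R this]]
    show ?thesis unfolding f_def by simp
  qed
  have f_x: "((\<lambda>x. f x y) has_real_derivative P x y) (at x)" if "(x, y) \<in> B" for x y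
  proof -
    have x: "x \<in> {a - r<..<a + r}" and y: "y \<in> {b - r..b + r}"
      using that by (auto simp: B_def I_def J_def)
    have "b - r \<in> {b - r..b + r}" using r by auto
    from DERIV_add[OF has_real_derivative_integral_upper(2)[OF P this x]
        has_real_derivative_integral_parameter[OF R x y]]
    have "((\<lambda>x. f x y) has_real_derivative P x (b - r) + integral {b - r..y} (\<lambda>s. pd1 R x s)) (at x)"
      unfolding f_def .
    moreover have "integral {b - r..y} (\<lambda>s. pd1 R x s) = integral {b - r..y} (\<lambda>s. pd2 P x s)"
    proof (rule integral_cong)
      fix s assume "s \<in> {b - r..y}"
      then have "(x, s) \<in> S" using x y by (intro mem_S) auto
      then show "pd1 R x s = pd2 P x s" using agree_onD[OF closed] by metis
    qed
    moreover have "P x y = P x (b - r) + integral {b - r..y} (\<lambda>s. pd2 P x s)"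
      using x y by (intro eq_integral_pd2[OF P]) auto
    ultimately show ?thesis by simp
  qed
  have f_pd: "agree_on B (pd1 f) P" "agree_on B (pd2 f) R"
    unfolding agree_on_def using f_x f_y pd1_eqI pd2_eqI by blast+
  have "case_prod f differentiable_on B"
    unfolding B_def I_def J_def
    using f_x f_y continuous_on_subset[OF smooth2_on_imp_continuous_on[OF R] B(3)]
    by (intro differentiable_on_Times_of_partials) (auto simp: B_def I_def J_def)
  moreover have "smooth2_on B (pd1 f)" "smooth2_on B (pd2 f)"
    using smooth2_on_agree_on[OF B(1) agree_on_sym[OF f_pd(1)] smooth2_on_subset[OF P B(3)]]
      smooth2_on_agree_on[OF B(1) agree_on_sym[OF f_pd(2)] smooth2_on_subset[OF R B(3)]] .
  ultimately have "smooth2_on B f"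
    by (simp add: smooth2_on_iff[of B f])
  with B f_pd that show thesis by blast
qed

section \<open>The hodograph transformation\<close>

text \<open>If \<open>x = X(u, v)\<close>, \<open>t = T(u, v)\<close> satisfy the hodograph equations, the prescribed
  second derivatives \<open>f\<^sub>u\<^sub>u = T h\<^sub>u\<^sub>u\<close>, \<open>f\<^sub>u\<^sub>v = X + T h\<^sub>u\<^sub>v\<close>,
  \<open>f\<^sub>v\<^sub>v = T h\<^sub>v\<^sub>v\<close> satisfy the integrability conditions, so three applications
  of the Poincare lemma produce \<open>f\<close>.\<close>

lemma hodograph_integrability:
  assumes M: "open M" and h: "smooth2_on M h" and X: "smooth2_on M X" and T: "smooth2_on M T"
    and hodograph: "pd2 X a b + pd2 T a b * pd1 (pd2 h) a b = pd1 T a b * pd2 (pd2 h) a b \<and>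
      pd2 T a b * pd1 (pd1 h) a b = pd1 X a b + pd1 T a b * pd1 (pd2 h) a b"
    and ab: "(a, b) \<in> M"
  shows "pd2 (\<lambda>a b. X a b + T a b * pd1 (pd2 h) a b) a b = pd1 (\<lambda>a b. T a b * pd2 (pd2 h) a b) a b \<and>
    pd2 (\<lambda>a b. T a b * pd1 (pd1 h) a b) a b = pd1 (\<lambda>a b. X a b + T a b * pd1 (pd2 h) a b) a b"
proof -
  note smooth = h X T smooth2_on_pd1 smooth2_on_pd2
  have at: "case_prod g differentiable (at (a, b))" if "smooth2_on M g" for g
    using smooth2_on_differentiable_at[OF that M ab] .
  have "pd2 (pd1 (pd2 h)) a b = pd1 (pd2 (pd2 h)) a b"
    using pd2_pd1_eq_pd1_pd2[OF M smooth2_on_pd2[OF h] ab] .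
  with pd_third_order_symmetric(2)[OF M h ab] hodograph show ?thesis
    by (simp add: at smooth smooth2_on_mult pd1_add pd2_add pd1_mult pd2_mult M algebra_simps)
qed

lemma hodograph_potential:
  assumes M: "open M" "(a0, b0) \<in> M"
    and h: "smooth2_on M h" and X: "smooth2_on M X" and T: "smooth2_on M T"
    and hodograph: "\<And>a b. (a, b) \<in> M \<Longrightarrow>
      pd2 X a b + pd2 T a b * pd1 (pd2 h) a b = pd1 T a b * pd2 (pd2 h) a b \<and>
      pd2 T a b * pd1 (pd1 h) a b = pd1 X a b + pd1 T a b * pd1 (pd2 h) a b"
  obtains W f where "open W" "(a0, b0) \<in> W" "W \<subseteq> M" "smooth2_on W f"
    "\<And>a b. (a, b) \<in> W \<Longrightarrow>
      pd1 (pd1 f) a b = T a b * pd1 (pd1 h) a b \<and>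
      pd1 (pd2 f) a b = X a b + T a b * pd1 (pd2 h) a b \<and>
      pd2 (pd2 f) a b = T a b * pd2 (pd2 h) a b"
proof -
  define Fuu where "Fuu = (\<lambda>a b. T a b * pd1 (pd1 h) a b)"
  define Fuv where "Fuv = (\<lambda>a b. X a b + T a b * pd1 (pd2 h) a b)"
  define Fvv where "Fvv = (\<lambda>a b. T a b * pd2 (pd2 h) a b)"
  have Fuu: "smooth2_on M Fuu" and Fuv: "smooth2_on M Fuv" and Fvv: "smooth2_on M Fvv"
    unfolding Fuu_def Fuv_def Fvv_def using M(1) h X T
    by (auto intro!: smooth2_on_add smooth2_on_mult smooth2_on_pd1 smooth2_on_pd2)
  have closed_vv: "agree_on M (pd2 Fuv) (pd1 Fvv)" and closed_uu: "agree_on M (pd2 Fuu) (pd1 Fuv)"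
    using hodograph_integrability[OF M(1) h X T hodograph]
    unfolding Fuu_def Fuv_def Fvv_def by (auto intro: agree_onI)
  obtain B1 R where B1: "open B1" "(a0, b0) \<in> B1" "B1 \<subseteq> M" and R: "smooth2_on B1 R"
    and R_pd: "agree_on B1 (pd1 R) Fuv" "agree_on B1 (pd2 R) Fvv"
    using exists_local_potential[OF M(1) Fuv Fvv closed_vv M(2)] .
  obtain B2 P where B2: "open B2" "(a0, b0) \<in> B2" "B2 \<subseteq> B1" and P: "smooth2_on B2 P"
    and P_pd: "agree_on B2 (pd1 P) Fuu" "agree_on B2 (pd2 P) Fuv"
    using exists_local_potential[OF B1(1) smooth2_on_subset[OF Fuu B1(3)] smooth2_on_subset[OF Fuv B1(3)]
        agree_on_subset[OF closed_uu B1(3)] B1(2)] .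
  have closed: "agree_on B2 (pd2 P) (pd1 R)"
  proof (rule agree_onI)
    fix a b assume ab: "(a, b) \<in> B2"
    then have "(a, b) \<in> B1" using B2(3) by blast
    then show "pd2 P a b = pd1 R a b"
      using agree_onD[OF P_pd(2) ab] agree_onD[OF R_pd(1)] by simp
  qed
  obtain W f where W: "open W" "(a0, b0) \<in> W" "W \<subseteq> B2" and f: "smooth2_on W f"
    and f_pd: "agree_on W (pd1 f) P" "agree_on W (pd2 f) R"
    using exists_local_potential[OF B2(1) P smooth2_on_subset[OF R B2(3)] closed B2(2)] .
  have f_second: "pd1 (pd1 f) a b = Fuu a b \<and> pd1 (pd2 f) a b = Fuv a b \<and> pd2 (pd2 f) a b = Fvv a b"
    if ab: "(a, b) \<in> W" for a b
  proof -
    have B2: "(a, b) \<in> B2" and B1: "(a, b) \<in> B1" using ab W(3) B2(3) by auto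
    show ?thesis
      using agree_onD[OF agree_on_pd1[OF W(1) f_pd(1)] ab] agree_onD[OF agree_on_pd1[OF W(1) f_pd(2)] ab]
        agree_onD[OF agree_on_pd2[OF W(1) f_pd(2)] ab] agree_onD[OF P_pd(1) B2] agree_onD[OF R_pd(1) B1]
        agree_onD[OF R_pd(2) B1]
      by simp
  qed
  show thesis
  proof (rule that[OF W(1,2) _ f])
    show "W \<subseteq> M" using W(3) B1(3) B2(3) by blast
    fix a b assume "(a, b) \<in> W"
    from f_second[OF this] show "pd1 (pd1 f) a b = T a b * pd1 (pd1 h) a b \<and>
      pd1 (pd2 f) a b = X a b + T a b * pd1 (pd2 h) a b \<and>
      pd2 (pd2 f) a b = T a b * pd2 (pd2 h) a b"
      by (simp only: Fuu_def Fuv_def Fvv_def)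
  qed
qed

lemma inverse_jacobian_hodograph:
  fixes J ux vx huu huv hvv :: real
  assumes "J \<noteq> 0"
  shows "- (huv * ux + hvv * vx) / J + ux / J * huv = - vx / J * hvv"
    and "ux / J * huu = (huu * ux + huv * vx) / J + - vx / J * huv"
  using assms by (simp_all add: field_simps)

lemma solution_hodograph_inverse:
  fixes h u v :: fn2
  assumes N: "open N" "(x0, t0) \<in> N" and u: "smooth2_on N u" and v: "smooth2_on N v"
    and in_D: "\<forall>(x, t) \<in> N. (u x t, v x t) \<in> D"
    and system: "\<forall>(x, t) \<in> N.
             pd2 u x t = pd1 (pd2 h) (u x t) (v x t) * pd1 u x t
                         + pd2 (pd2 h) (u x t) (v x t) * pd1 v x t
           \<and> pd2 v x t = pd1 (pd1 h) (u x t) (v x t) * pd1 u x t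
                         + pd1 (pd2 h) (u x t) (v x t) * pd1 v x t"
    and nondeg: "pd1 (pd1 h) (u x0 t0) (v x0 t0) * (pd1 u x0 t0)\<^sup>2
             - pd2 (pd2 h) (u x0 t0) (v x0 t0) * (pd1 v x0 t0)\<^sup>2 \<noteq> 0"
  obtains N0 M X T where "open N0" "N0 \<subseteq> N" "(x0, t0) \<in> N0"
    "open M" "(u x0 t0, v x0 t0) \<in> M" "M \<subseteq> D"
    "\<And>x t. (x, t) \<in> N0 \<Longrightarrow> (u x t, v x t) \<in> M \<and> X (u x t) (v x t) = x \<and> T (u x t) (v x t) = t"
    "smooth2_on M X" "smooth2_on M T"
    "\<And>a b. (a, b) \<in> M \<Longrightarrow>
      pd2 X a b + pd2 T a b * pd1 (pd2 h) a b = pd1 T a b * pd2 (pd2 h) a b \<and>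
      pd2 T a b * pd1 (pd1 h) a b = pd1 X a b + pd1 T a b * pd1 (pd2 h) a b"
proof -
  have "jac2 u v x0 t0 \<noteq> 0"
    using system N(2) nondeg by (auto simp: jac2_def algebra_simps power2_eq_square)
  then obtain N0 M X T where N0: "open N0" "N0 \<subseteq> N" "(x0, t0) \<in> N0"
    and M: "open M" "(u x0 t0, v x0 t0) \<in> M"
    and fw: "\<And>x t. (x, t) \<in> N0 \<Longrightarrow> (u x t, v x t) \<in> M \<and> X (u x t) (v x t) = x \<and> T (u x t) (v x t) = t"
    and bw: "\<And>a b. (a, b) \<in> M \<Longrightarrow> (X a b, T a b) \<in> N0 \<and> u (X a b) (T a b) = a \<and> v (X a b) (T a b) = b"
    and jac: "\<And>x t. (x, t) \<in> N0 \<Longrightarrow> jac2 u v x t \<noteq> 0"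
    and X: "smooth2_on M X" and T: "smooth2_on M T"
    and pd: "\<And>a b. (a, b) \<in> M \<Longrightarrow>
       pd1 X a b = pd2 v (X a b) (T a b) / jac2 u v (X a b) (T a b) \<and>
       pd2 X a b = - pd2 u (X a b) (T a b) / jac2 u v (X a b) (T a b) \<and>
       pd1 T a b = - pd1 v (X a b) (T a b) / jac2 u v (X a b) (T a b) \<and>
       pd2 T a b = pd1 u (X a b) (T a b) / jac2 u v (X a b) (T a b)"
    using smooth_inverse_function_theorem2[OF N u v] by blast
  have "M \<subseteq> D"
    using bw N0(2) in_D by fastforce
  moreover have "pd2 X a b + pd2 T a b * pd1 (pd2 h) a b = pd1 T a b * pd2 (pd2 h) a b \<and>
      pd2 T a b * pd1 (pd1 h) a b = pd1 X a b + pd1 T a b * pd1 (pd2 h) a b" if ab: "(a, b) \<in> M" for a b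
  proof -
    have xt: "(X a b, T a b) \<in> N0" and uv: "u (X a b) (T a b) = a" "v (X a b) (T a b) = b"
      using bw[OF ab] by auto
    have "(X a b, T a b) \<in> N" using xt N0(2) by blast
    then have "pd2 u (X a b) (T a b) = pd1 (pd2 h) a b * pd1 u (X a b) (T a b) + pd2 (pd2 h) a b * pd1 v (X a b) (T a b)"
      "pd2 v (X a b) (T a b) = pd1 (pd1 h) a b * pd1 u (X a b) (T a b) + pd1 (pd2 h) a b * pd1 v (X a b) (T a b)"
      using system uv by auto
    with pd[OF ab] jac[OF xt] show ?thesis
      using inverse_jacobian_hodograph by simp
  qed
  ultimately show thesis
    using that[OF N0 M _ fw X T] by blast
qed

lemma hodograph_potential_exists:
  fixes h u v :: fn2
  assumes h: "smooth2_on D h"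
    and N: "open N" "(x0, t0) \<in> N" and u: "smooth2_on N u" and v: "smooth2_on N v"
    and in_D: "\<forall>(x, t) \<in> N. (u x t, v x t) \<in> D"
    and system: "\<forall>(x, t) \<in> N.
             pd2 u x t = pd1 (pd2 h) (u x t) (v x t) * pd1 u x t
                         + pd2 (pd2 h) (u x t) (v x t) * pd1 v x t
           \<and> pd2 v x t = pd1 (pd1 h) (u x t) (v x t) * pd1 u x t
                         + pd1 (pd2 h) (u x t) (v x t) * pd1 v x t"
    and nondeg: "\<forall>(x, t) \<in> N.
             pd1 (pd1 h) (u x t) (v x t) * (pd1 u x t)\<^sup>2
             - pd2 (pd2 h) (u x t) (v x t) * (pd1 v x t)\<^sup>2 \<noteq> 0"
  shows "\<exists>f W N'.
             open W \<and> (u x0 t0, v x0 t0) \<in> W \<and> W \<subseteq> D \<and> smooth2_on W f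
             \<and> (\<forall>(a, b) \<in> W. pd1 (pd1 h) a b * pd2 (pd2 f) a b
                               = pd2 (pd2 h) a b * pd1 (pd1 f) a b)
             \<and> open N' \<and> (x0, t0) \<in> N' \<and> N' \<subseteq> N
             \<and> (\<forall>(x, t) \<in> N'. (u x t, v x t) \<in> W
                  \<and> x + t * pd1 (pd2 h) (u x t) (v x t) = pd1 (pd2 f) (u x t) (v x t)
                  \<and> t * pd2 (pd2 h) (u x t) (v x t) = pd2 (pd2 f) (u x t) (v x t))"
proof -
  have nondeg0: "pd1 (pd1 h) (u x0 t0) (v x0 t0) * (pd1 u x0 t0)\<^sup>2
      - pd2 (pd2 h) (u x0 t0) (v x0 t0) * (pd1 v x0 t0)\<^sup>2 \<noteq> 0"
    using nondeg N(2) by auto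
  obtain N0 M X T where N0: "open N0" "N0 \<subseteq> N" "(x0, t0) \<in> N0"
    and M: "open M" "(u x0 t0, v x0 t0) \<in> M" "M \<subseteq> D"
    and fw: "\<And>x t. (x, t) \<in> N0 \<Longrightarrow> (u x t, v x t) \<in> M \<and> X (u x t) (v x t) = x \<and> T (u x t) (v x t) = t"
    and X: "smooth2_on M X" and T: "smooth2_on M T"
    and hodograph: "\<And>a b. (a, b) \<in> M \<Longrightarrow>
      pd2 X a b + pd2 T a b * pd1 (pd2 h) a b = pd1 T a b * pd2 (pd2 h) a b \<and>
      pd2 T a b * pd1 (pd1 h) a b = pd1 X a b + pd1 T a b * pd1 (pd2 h) a b"
    using solution_hodograph_inverse[OF N u v in_D system nondeg0] by blast
  obtain W f where W: "open W" "(u x0 t0, v x0 t0) \<in> W" "W \<subseteq> M" and f: "smooth2_on W f"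
    and f_second: "\<And>a b. (a, b) \<in> W \<Longrightarrow>
      pd1 (pd1 f) a b = T a b * pd1 (pd1 h) a b \<and>
      pd1 (pd2 f) a b = X a b + T a b * pd1 (pd2 h) a b \<and>
      pd2 (pd2 f) a b = T a b * pd2 (pd2 h) a b"
    using hodograph_potential[OF M(1,2) smooth2_on_subset[OF h M(3)] X T hodograph] by metis
  define N' where "N' = N0 \<inter> (\<lambda>(x, t). (u x t, v x t)) -` W"
  have "continuous_on N0 (\<lambda>(x, t). (u x t, v x t))"
    using smooth2_on_imp_continuous_on[OF smooth2_on_subset[OF u N0(2)]]
      smooth2_on_imp_continuous_on[OF smooth2_on_subset[OF v N0(2)]]
    by (simp add: split_beta' continuous_on_Pair)
  then have "open N'"
    unfolding N'_def using N0(1) W(1) by (rule continuous_open_preimage)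
  moreover have "(x0, t0) \<in> N'" "N' \<subseteq> N" "W \<subseteq> D"
    using N0 W M(3) by (auto simp: N'_def)
  moreover have "\<forall>(x, t) \<in> N'. (u x t, v x t) \<in> W
      \<and> x + t * pd1 (pd2 h) (u x t) (v x t) = pd1 (pd2 f) (u x t) (v x t)
      \<and> t * pd2 (pd2 h) (u x t) (v x t) = pd2 (pd2 f) (u x t) (v x t)"
    using fw f_second by (auto simp: N'_def)
  moreover have "\<forall>(a, b) \<in> W. pd1 (pd1 h) a b * pd2 (pd2 f) a b = pd2 (pd2 h) a b * pd1 (pd1 f) a b"
    using f_second by auto
  ultimately show ?thesis
    using W(1,2) f by blast
qed

lemma implicit_hodograph_jacobian:
  fixes hvv fvv T Tu Tv Xu Xv huv huuv fuuv huvv fuvv hvvv fvvv :: real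
  assumes "hvv \<noteq> 0" and T: "T = fvv / hvv"
    and Tu: "Tu = (fuvv * hvv - fvv * huvv) / (hvv * hvv)"
    and Tv: "Tv = (fvvv * hvv - fvv * hvvv) / (hvv * hvv)"
    and Xu: "Xu = fuuv - (Tu * huv + T * huuv)"
    and Xv: "Xv = fuvv - (Tv * huv + T * huvv)"
  shows "Xu * Tv - Xv * Tu = ((T * huuv - fuuv) * (T * hvvv - fvvv) - (T * huvv - fuvv)\<^sup>2) / hvv"
proof -
  have Tu': "Tu = - (T * huvv - fuvv) / hvv" and Tv': "Tv = - (T * hvvv - fvvv) / hvv"
    using \<open>hvv \<noteq> 0\<close> unfolding Tu Tv T by (simp_all add: field_simps)
  show ?thesis
    unfolding Xu Xv Tu' Tv' using \<open>hvv \<noteq> 0\<close> by (simp add: field_simps power2_eq_square)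
qed

text \<open>The equations \<open>f\<^sub>u\<^sub>u h\<^sub>v\<^sub>v = f\<^sub>v\<^sub>v h\<^sub>u\<^sub>u\<close> and its \<open>v\<close>-derivative
  are exactly what turns the inverse-function formulas into the system.\<close>

lemma implicit_hodograph_system:
  fixes hvv fvv T Tu Tv Xu Xv huv huu huuv fuuv huvv fuvv hvvv fvvv fuu J :: real
  assumes "hvv \<noteq> 0" and T: "T = fvv / hvv"
    and Tu: "Tu = (fuvv * hvv - fvv * huvv) / (hvv * hvv)"
    and Tv: "Tv = (fvvv * hvv - fvv * hvvv) / (hvv * hvv)"
    and Xu: "Xu = fuuv - (Tu * huv + T * huuv)"
    and Xv: "Xv = fuvv - (Tv * huv + T * huvv)"
    and pde: "huu * fvv = hvv * fuu"
    and pde_v: "huuv * fvv + huu * fvvv = hvvv * fuu + hvv * fuuv"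
  shows "- Xv / J = huv * (Tv / J) + hvv * (- Tu / J)"
    and "Xu / J = huu * (Tv / J) + huv * (- Tu / J)"
proof -
  have "hvv * Tu = fuvv - T * huvv" using \<open>hvv \<noteq> 0\<close> unfolding Tu T by (simp add: field_simps)
  then have "- Xv = huv * Tv - hvv * Tu" unfolding Xv by (simp add: algebra_simps)
  then show "- Xv / J = huv * (Tv / J) + hvv * (- Tu / J)" by (simp add: diff_divide_distrib)
  have fuu: "fuu = huu * fvv / hvv" using pde \<open>hvv \<noteq> 0\<close> by (simp add: field_simps)
  have "hvv * (fuuv - T * huuv) = huu * (fvvv - T * hvvv)"
    using pde_v \<open>hvv \<noteq> 0\<close> unfolding fuu T by (simp add: field_simps)
  moreover have "hvv * Tv = fvvv - T * hvvv"
    using \<open>hvv \<noteq> 0\<close> unfolding Tv T by (simp add: field_simps)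
  ultimately have "fuuv - T * huuv = huu * Tv"
    using \<open>hvv \<noteq> 0\<close> by (metis mult.left_commute mult_left_cancel)
  then have "Xu = huu * Tv - huv * Tu"
    unfolding Xu by (simp add: algebra_simps)
  then show "Xu / J = huu * (Tv / J) + huv * (- Tu / J)" by (simp add: diff_divide_distrib)
qed

locale implicit_hodograph =
  fixes W :: "(real \<times> real) set" and h f :: fn2
  assumes open_W: "open W" and smooth_h: "smooth2_on W h" and smooth_f: "smooth2_on W f"
    and hvv_nonzero: "\<And>a b. (a, b) \<in> W \<Longrightarrow> pd2 (pd2 h) a b \<noteq> 0"
    and linear_pde: "\<And>a b. (a, b) \<in> W \<Longrightarrow>
      pd1 (pd1 h) a b * pd2 (pd2 f) a b = pd2 (pd2 h) a b * pd1 (pd1 f) a b"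
begin

text \<open>Solved for \<open>(x, t)\<close>, the implicit equations read \<open>x = x_of u v\<close>, \<open>t = t_of u v\<close>.\<close>

definition t_of :: fn2 where "t_of a b = pd2 (pd2 f) a b / pd2 (pd2 h) a b"

definition x_of :: fn2 where "x_of a b = pd1 (pd2 f) a b - t_of a b * pd1 (pd2 h) a b"

lemma implicit_equations_iff:
  assumes "(a, b) \<in> W"
  shows "x + t * pd1 (pd2 h) a b = pd1 (pd2 f) a b \<and> t * pd2 (pd2 h) a b = pd2 (pd2 f) a b
    \<longleftrightarrow> x_of a b = x \<and> t_of a b = t"
proof -
  have "t_of a b = t \<longleftrightarrow> t * pd2 (pd2 h) a b = pd2 (pd2 f) a b"
    using hvv_nonzero[OF assms] by (auto simp: t_of_def field_simps)
  then show ?thesis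
    by (auto simp: x_of_def)
qed

lemmas smooth_hf = smooth_h smooth_f smooth2_on_pd1 smooth2_on_pd2

lemma smooth2_on_t_of: "smooth2_on W t_of"
  unfolding t_of_def[abs_def] using open_W hvv_nonzero
  by (auto intro!: smooth2_on_divide smooth_hf)

lemma smooth2_on_x_of: "smooth2_on W x_of"
  unfolding x_of_def[abs_def] using open_W
  by (auto intro!: smooth2_on_diff smooth2_on_mult smooth2_on_t_of smooth_hf)

lemma differentiable_at_smooth: "smooth2_on W g \<Longrightarrow> (a, b) \<in> W \<Longrightarrow> case_prod g differentiable (at (a, b))"
  using smooth2_on_differentiable_at open_W by blast

lemma pd_t_of:
  assumes ab: "(a, b) \<in> W"
  shows "pd1 t_of a b = (pd2 (pd2 (pd1 f)) a b * pd2 (pd2 h) a b - pd2 (pd2 f) a b * pd2 (pd2 (pd1 h)) a b)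
        / (pd2 (pd2 h) a b * pd2 (pd2 h) a b)"
    and "pd2 t_of a b = (pd2 (pd2 (pd2 f)) a b * pd2 (pd2 h) a b - pd2 (pd2 f) a b * pd2 (pd2 (pd2 h)) a b)
        / (pd2 (pd2 h) a b * pd2 (pd2 h) a b)"
proof -
  have t_of_eq: "t_of = (\<lambda>a b. pd2 (pd2 f) a b / pd2 (pd2 h) a b)"
    by (simp add: t_of_def[abs_def])
  note d = differentiable_at_smooth[OF smooth2_on_pd2[OF smooth2_on_pd2[OF smooth_f]] ab]
    differentiable_at_smooth[OF smooth2_on_pd2[OF smooth2_on_pd2[OF smooth_h]] ab]
  show "pd1 t_of a b = (pd2 (pd2 (pd1 f)) a b * pd2 (pd2 h) a b - pd2 (pd2 f) a b * pd2 (pd2 (pd1 h)) a b)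
        / (pd2 (pd2 h) a b * pd2 (pd2 h) a b)"
    using pd1_divide[OF d hvv_nonzero[OF ab]] pd_third_order_symmetric(1)[OF open_W smooth_f ab]
      pd_third_order_symmetric(1)[OF open_W smooth_h ab]
    by (simp add: t_of_eq)
  show "pd2 t_of a b = (pd2 (pd2 (pd2 f)) a b * pd2 (pd2 h) a b - pd2 (pd2 f) a b * pd2 (pd2 (pd2 h)) a b)
        / (pd2 (pd2 h) a b * pd2 (pd2 h) a b)"
    using pd2_divide[OF d hvv_nonzero[OF ab]] by (simp add: t_of_eq)
qed

lemma pd_x_of:
  assumes ab: "(a, b) \<in> W"
  shows "pd1 x_of a b = pd2 (pd1 (pd1 f)) a b - (pd1 t_of a b * pd1 (pd2 h) a b + t_of a b * pd2 (pd1 (pd1 h)) a b)"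
    and "pd2 x_of a b = pd2 (pd2 (pd1 f)) a b - (pd2 t_of a b * pd1 (pd2 h) a b + t_of a b * pd2 (pd2 (pd1 h)) a b)"
proof -
  have x_of_eq: "x_of = (\<lambda>a b. pd1 (pd2 f) a b - t_of a b * pd1 (pd2 h) a b)"
    by (simp add: x_of_def[abs_def])
  show "pd1 x_of a b = pd2 (pd1 (pd1 f)) a b - (pd1 t_of a b * pd1 (pd2 h) a b + t_of a b * pd2 (pd1 (pd1 h)) a b)"
    "pd2 x_of a b = pd2 (pd2 (pd1 f)) a b - (pd2 t_of a b * pd1 (pd2 h) a b + t_of a b * pd2 (pd2 (pd1 h)) a b)"
    using ab pd_third_order_symmetric(2,3)[OF open_W smooth_f ab] pd_third_order_symmetric(2,3)[OF open_W smooth_h ab]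
    unfolding x_of_eq
    by (simp_all add: differentiable_at_smooth smooth_hf smooth2_on_t_of smooth2_on_mult open_W
        pd1_diff pd2_diff pd1_mult pd2_mult)
qed

lemma linear_pde_pd2:
  assumes ab: "(a, b) \<in> W"
  shows "pd2 (pd1 (pd1 h)) a b * pd2 (pd2 f) a b + pd1 (pd1 h) a b * pd2 (pd2 (pd2 f)) a b
      = pd2 (pd2 (pd2 h)) a b * pd1 (pd1 f) a b + pd2 (pd2 h) a b * pd2 (pd1 (pd1 f)) a b"
proof -
  have "agree_on W (\<lambda>a b. pd1 (pd1 h) a b * pd2 (pd2 f) a b) (\<lambda>a b. pd2 (pd2 h) a b * pd1 (pd1 f) a b)"
    using linear_pde by (rule agree_onI)
  from agree_onD[OF agree_on_pd2[OF open_W this] ab] show ?thesis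
    using ab by (simp add: differentiable_at_smooth smooth_hf pd2_mult)
qed

lemma jac2_x_of_t_of:
  assumes "(a, b) \<in> W"
  shows "jac2 x_of t_of a b =
    ((t_of a b * pd2 (pd1 (pd1 h)) a b - pd2 (pd1 (pd1 f)) a b)
      * (t_of a b * pd2 (pd2 (pd2 h)) a b - pd2 (pd2 (pd2 f)) a b)
     - (t_of a b * pd2 (pd2 (pd1 h)) a b - pd2 (pd2 (pd1 f)) a b)\<^sup>2) / pd2 (pd2 h) a b"
  using implicit_hodograph_jacobian[OF hvv_nonzero[OF assms] t_of_def pd_t_of[OF assms] pd_x_of[OF assms]]
  by (simp add: jac2_def)

lemma inverse_solves_system:
  assumes "(a, b) \<in> W"
  shows "- pd2 x_of a b / J = pd1 (pd2 h) a b * (pd2 t_of a b / J) + pd2 (pd2 h) a b * (- pd1 t_of a b / J)"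
    and "pd1 x_of a b / J = pd1 (pd1 h) a b * (pd2 t_of a b / J) + pd1 (pd2 h) a b * (- pd1 t_of a b / J)"
  using implicit_hodograph_system[OF hvv_nonzero[OF assms] t_of_def pd_t_of[OF assms] pd_x_of[OF assms]
      linear_pde[OF assms] linear_pde_pd2[OF assms]] .

end

lemma implicit_solution_solves_system:
  fixes h f :: fn2
  assumes W: "open W" "(u0, v0) \<in> W" and h: "smooth2_on W h" and f: "smooth2_on W f"
    and hvv: "\<And>a b. (a, b) \<in> W \<Longrightarrow> pd2 (pd2 h) a b \<noteq> 0"
    and pde: "\<forall>(a, b) \<in> W. pd1 (pd1 h) a b * pd2 (pd2 f) a b = pd2 (pd2 h) a b * pd1 (pd1 f) a b"
    and eq1: "x0 + t0 * pd1 (pd2 h) u0 v0 = pd1 (pd2 f) u0 v0"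
    and eq2: "t0 * pd2 (pd2 h) u0 v0 = pd2 (pd2 f) u0 v0"
    and det: "(t0 * pd2 (pd1 (pd1 h)) u0 v0 - pd2 (pd1 (pd1 f)) u0 v0)
            * (t0 * pd2 (pd2 (pd2 h)) u0 v0 - pd2 (pd2 (pd2 f)) u0 v0)
          - (t0 * pd2 (pd2 (pd1 h)) u0 v0 - pd2 (pd2 (pd1 f)) u0 v0)\<^sup>2 \<noteq> 0"
  shows "\<exists>u v N V.
             open N \<and> (x0, t0) \<in> N \<and> open V \<and> (u0, v0) \<in> V \<and> V \<subseteq> W
             \<and> u x0 t0 = u0 \<and> v x0 t0 = v0
             \<and> (\<forall>(x, t) \<in> N. (u x t, v x t) \<in> V
                  \<and> x + t * pd1 (pd2 h) (u x t) (v x t) = pd1 (pd2 f) (u x t) (v x t)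
                  \<and> t * pd2 (pd2 h) (u x t) (v x t) = pd2 (pd2 f) (u x t) (v x t))
             \<and> (\<forall>(x, t) \<in> N. \<forall>(a, b) \<in> V.
                  x + t * pd1 (pd2 h) a b = pd1 (pd2 f) a b
                  \<and> t * pd2 (pd2 h) a b = pd2 (pd2 f) a b
                  \<longrightarrow> a = u x t \<and> b = v x t)
             \<and> smooth2_on N u \<and> smooth2_on N v
             \<and> (\<forall>(x, t) \<in> N.
                  pd2 u x t = pd1 (pd2 h) (u x t) (v x t) * pd1 u x t
                              + pd2 (pd2 h) (u x t) (v x t) * pd1 v x t
                \<and> pd2 v x t = pd1 (pd1 h) (u x t) (v x t) * pd1 u x t
                              + pd1 (pd2 h) (u x t) (v x t) * pd1 v x t)"
proof -
  interpret implicit_hodograph W h f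
    using W(1) h f hvv pde by unfold_locales auto
  have initial: "x_of u0 v0 = x0" "t_of u0 v0 = t0"
    using implicit_equations_iff[OF W(2)] eq1 eq2 by auto
  have jac0: "jac2 x_of t_of u0 v0 \<noteq> 0"
    using jac2_x_of_t_of[OF W(2)] det hvv[OF W(2)] by (simp add: initial)
  obtain V N u v where V: "open V" "V \<subseteq> W" "(u0, v0) \<in> V"
    and N: "open N" "(x_of u0 v0, t_of u0 v0) \<in> N"
    and fw: "\<And>a b. (a, b) \<in> V \<Longrightarrow> (x_of a b, t_of a b) \<in> N \<and> u (x_of a b) (t_of a b) = a \<and> v (x_of a b) (t_of a b) = b"
    and bw: "\<And>x t. (x, t) \<in> N \<Longrightarrow> (u x t, v x t) \<in> V \<and> x_of (u x t) (v x t) = x \<and> t_of (u x t) (v x t) = t"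
    and "\<And>a b. (a, b) \<in> V \<Longrightarrow> jac2 x_of t_of a b \<noteq> 0"
    and u: "smooth2_on N u" and v: "smooth2_on N v"
    and pd: "\<And>x t. (x, t) \<in> N \<Longrightarrow>
       pd1 u x t = pd2 t_of (u x t) (v x t) / jac2 x_of t_of (u x t) (v x t) \<and>
       pd2 u x t = - pd2 x_of (u x t) (v x t) / jac2 x_of t_of (u x t) (v x t) \<and>
       pd1 v x t = - pd1 t_of (u x t) (v x t) / jac2 x_of t_of (u x t) (v x t) \<and>
       pd2 v x t = pd1 x_of (u x t) (v x t) / jac2 x_of t_of (u x t) (v x t)"
    using smooth_inverse_function_theorem2[OF W smooth2_on_x_of smooth2_on_t_of jac0] by blast
  have system: "\<forall>(x, t) \<in> N. pd2 u x t = pd1 (pd2 h) (u x t) (v x t) * pd1 u x t + pd2 (pd2 h) (u x t) (v x t) * pd1 v x t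
      \<and> pd2 v x t = pd1 (pd1 h) (u x t) (v x t) * pd1 u x t + pd1 (pd2 h) (u x t) (v x t) * pd1 v x t"
    using inverse_solves_system pd bw V(2) by fastforce
  have solves: "\<forall>(x, t) \<in> N. (u x t, v x t) \<in> V \<and> x + t * pd1 (pd2 h) (u x t) (v x t) = pd1 (pd2 f) (u x t) (v x t)
      \<and> t * pd2 (pd2 h) (u x t) (v x t) = pd2 (pd2 f) (u x t) (v x t)"
    using bw implicit_equations_iff V(2) by fastforce
  have unique: "\<forall>(x, t) \<in> N. \<forall>(a, b) \<in> V. x + t * pd1 (pd2 h) a b = pd1 (pd2 f) a b
      \<and> t * pd2 (pd2 h) a b = pd2 (pd2 f) a b \<longrightarrow> a = u x t \<and> b = v x t"
  proof clarify
    fix x t a b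
    assume "(a, b) \<in> V" "x + t * pd1 (pd2 h) a b = pd1 (pd2 f) a b" "t * pd2 (pd2 h) a b = pd2 (pd2 f) a b"
    then have "x_of a b = x" "t_of a b = t"
      using implicit_equations_iff[of a b] V(2) by blast+
    with fw[OF \<open>(a, b) \<in> V\<close>] show "a = u x t \<and> b = v x t" by simp
  qed
  have "u x0 t0 = u0" "v x0 t0 = v0"
    using fw[OF V(3)] initial by auto
  with N V u v solves unique system show ?thesis
    unfolding initial by blast
qed

theorem mainTheorem1:
  fixes h :: "real \<Rightarrow> real \<Rightarrow> real" and D :: "(real \<times> real) set"
  assumes D_open: "open D"
    and h_smooth: "smooth2_on D h"
    and h_nondeg: "\<forall>(a, b) \<in> D. pd1 (pd1 h) a b * pd2 (pd2 h) a b \<noteq> 0"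
  shows
    "(\<forall>(u :: real \<Rightarrow> real \<Rightarrow> real) (v :: real \<Rightarrow> real \<Rightarrow> real) N x0 t0.
        open N \<and> (x0, t0) \<in> N \<and> smooth2_on N u \<and> smooth2_on N v
        \<and> (\<forall>(x, t) \<in> N. (u x t, v x t) \<in> D)
        \<and> (\<forall>(x, t) \<in> N.
             pd2 u x t = pd1 (pd2 h) (u x t) (v x t) * pd1 u x t
                         + pd2 (pd2 h) (u x t) (v x t) * pd1 v x t
           \<and> pd2 v x t = pd1 (pd1 h) (u x t) (v x t) * pd1 u x t
                         + pd1 (pd2 h) (u x t) (v x t) * pd1 v x t)
        \<and> (\<forall>(x, t) \<in> N.
             pd1 (pd1 h) (u x t) (v x t) * (pd1 u x t)\<^sup>2
             - pd2 (pd2 h) (u x t) (v x t) * (pd1 v x t)\<^sup>2 \<noteq> 0)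
      \<longrightarrow> (\<exists>(f :: real \<Rightarrow> real \<Rightarrow> real) W N'.
             open W \<and> (u x0 t0, v x0 t0) \<in> W \<and> W \<subseteq> D \<and> smooth2_on W f
             \<and> (\<forall>(a, b) \<in> W. pd1 (pd1 h) a b * pd2 (pd2 f) a b
                               = pd2 (pd2 h) a b * pd1 (pd1 f) a b)
             \<and> open N' \<and> (x0, t0) \<in> N' \<and> N' \<subseteq> N
             \<and> (\<forall>(x, t) \<in> N'. (u x t, v x t) \<in> W
                  \<and> x + t * pd1 (pd2 h) (u x t) (v x t) = pd1 (pd2 f) (u x t) (v x t)
                  \<and> t * pd2 (pd2 h) (u x t) (v x t) = pd2 (pd2 f) (u x t) (v x t))))
   \<and> (\<forall>(f :: real \<Rightarrow> real \<Rightarrow> real) W u0 v0 x0 t0.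
        open W \<and> (u0, v0) \<in> W \<and> W \<subseteq> D \<and> smooth2_on W f
        \<and> (\<forall>(a, b) \<in> W. pd1 (pd1 h) a b * pd2 (pd2 f) a b
                          = pd2 (pd2 h) a b * pd1 (pd1 f) a b)
        \<and> x0 + t0 * pd1 (pd2 h) u0 v0 = pd1 (pd2 f) u0 v0
        \<and> t0 * pd2 (pd2 h) u0 v0 = pd2 (pd2 f) u0 v0
        \<and> (t0 * pd2 (pd1 (pd1 h)) u0 v0 - pd2 (pd1 (pd1 f)) u0 v0)
            * (t0 * pd2 (pd2 (pd2 h)) u0 v0 - pd2 (pd2 (pd2 f)) u0 v0)
          - (t0 * pd2 (pd2 (pd1 h)) u0 v0 - pd2 (pd2 (pd1 f)) u0 v0)\<^sup>2 \<noteq> 0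
      \<longrightarrow> (\<exists>(u :: real \<Rightarrow> real \<Rightarrow> real) (v :: real \<Rightarrow> real \<Rightarrow> real) N V.
             open N \<and> (x0, t0) \<in> N \<and> open V \<and> (u0, v0) \<in> V \<and> V \<subseteq> W
             \<and> u x0 t0 = u0 \<and> v x0 t0 = v0
             \<and> (\<forall>(x, t) \<in> N. (u x t, v x t) \<in> V
                  \<and> x + t * pd1 (pd2 h) (u x t) (v x t) = pd1 (pd2 f) (u x t) (v x t)
                  \<and> t * pd2 (pd2 h) (u x t) (v x t) = pd2 (pd2 f) (u x t) (v x t))
             \<and> (\<forall>(x, t) \<in> N. \<forall>(a, b) \<in> V.
                  x + t * pd1 (pd2 h) a b = pd1 (pd2 f) a b
                  \<and> t * pd2 (pd2 h) a b = pd2 (pd2 f) a b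
                  \<longrightarrow> a = u x t \<and> b = v x t)
             \<and> smooth2_on N u \<and> smooth2_on N v
             \<and> (\<forall>(x, t) \<in> N.
                  pd2 u x t = pd1 (pd2 h) (u x t) (v x t) * pd1 u x t
                              + pd2 (pd2 h) (u x t) (v x t) * pd1 v x t
                \<and> pd2 v x t = pd1 (pd1 h) (u x t) (v x t) * pd1 u x t
                              + pd1 (pd2 h) (u x t) (v x t) * pd1 v x t)))"
proof (intro conjI allI impI, goal_cases)
  case (1 u v N x0 t0)
  then show ?case
    by (elim conjE) (rule hodograph_potential_exists[OF h_smooth])
next
  case (2 f W u0 v0 x0 t0)
  then have "W \<subseteq> D" by blast
  then have "smooth2_on W h" by (rule smooth2_on_subset[OF h_smooth])
  moreover have "pd2 (pd2 h) a b \<noteq> 0" if "(a, b) \<in> W" for a b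
    using h_nondeg \<open>W \<subseteq> D\<close> that by auto
  ultimately show ?case
    using 2 by (elim conjE) (rule implicit_solution_solves_system)
qed

end
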